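(* Let $G_1,G_2$ be nondeterministic automata ($G_i=\langle\Sigma_{i,\tau},Q_i,\rightarrow_i,Q_i^0\rangle$) with secret states $Q_i^S\subseteq Q_i$, and equip $G_1\|G_2$ with secret states $\{(x_1,x_2)\mid x_1\in Q_1^S\text{ or }x_2\in Q_2^S\}$; assume $UR(Q_i^0)\not\subseteq Q_i^S$ for $i=1,2$. For $i=1,2$, let $\sim_o$ be an opaque observation equivalence on $G_i$ with quotient $\tilde G_i$ (secret states $\{[x]\mid x\in Q_i^S\}$), let $H_{i,ob}$ be the quotient of $det(\tilde G_i)$ modulo an opaque bisimulation, $H_{i,b}$ the quotient of $det(\tilde G_i)$ modulo a bisimulation, and $H_{i,obd}$ the desired observer of $H_{i,ob}$ (delete classes $[X]$ with $X$ consisting only of secret states, keep reachable part). Let $T'_i=TPO(H_{i,obd},H_{i,b})$, let $G_i^T$ be the transformed automaton of $T'_i$, let $T=TPO(det_d(G_1\|G_2),det(G_1\|G_2))$ be the largest monolithic three-player observer w.r.t. $G_1\|G_2$, and let $\rho$ be the renaming map. Then for every string $s$ defined from the initial state of $G_1^T\|G_2^T$, the string $\rho(s)$ labels a path from the initial state of $T$.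
   Context: Automata: a (nondeterministic) automaton $G=\langle\Sigma_\tau,Q,\rightarrow,Q^0\rangle$ has finite observable alphabet $\Sigma$, special unobservable symbol $\tau$, $\Sigma_\tau=\Sigma\cup\{\tau\}$, $\rightarrow\subseteq Q\times\Sigma_\tau\times Q$, initial states $Q^0$. Deterministic: one initial state, no $\tau$-transitions, functional. $p\overset{s}{\Rightarrow}q$ ($s\in\Sigma^*$): a path from $p$ to $q$ whose labels with $\tau$'s deleted spell $s$. $UR(B)=\{q\mid b\overset{\varepsilon}{\Rightarrow}q,\ b\in B\}$. Observer $det(G)$: deterministic over $\Sigma$, initial state $UR(Q^0)$, $X\xrightarrow{\sigma}Y$ iff $Y=UR(\{y\mid x\xrightarrow{\sigma}y,\ x\in X\})\ne\emptyset$, reachable part. Desired observer $det_d(G)$: $det(G)$ with every state $X\subseteq Q^S$ deleted, reachable part kept. Quotient modulo equivalence $\sim$: classes as states, $[x]\xrightarrow{\sigma}[y]$ iff $x'\xrightarrow{\sigma}y'$ for some $x'\in[x],y'\in[y]$, classes of initial states initial. Bisimulation: equivalence $\approx$ with $x_1\approx x_2$, $x_1\xrightarrow{\sigma}y_1$ implying $x_2\xrightarrow{\sigma}y_2$ for some $y_2\approx y_1$. Opaque observation equivalence on $G$: equivalence $\sim_o$ on $Q$ such that $x_1\sim_o x_2$ implies (i) whenever $x_1\overset{s}{\Rightarrow}y_1$ there is $y_2\sim_o y_1$ with $x_2\overset{s}{\Rightarrow}y_2$, and (ii) $x_1\in Q^S\iff x_2\in Q^S$. Opaque bisimulation on $det(G)$: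 equivalence $\approx_o$ on its states with $X_1\approx_o X_2$ implying (i) whenever $X_1\xrightarrow{s}Y_1$ there is $Y_2\approx_o Y_1$ with $X_2\xrightarrow{s}Y_2$, and (ii) $X_1\subseteq Q^S\iff X_2\subseteq Q^S$. Synchronous composition of $A_1$ (alphabet $\Sigma_1$) and $A_2$ (alphabet $\Sigma_2$): states $Q_1\times Q_2$, initial $Q_1^0\times Q_2^0$, marked $Q_1^m\times Q_2^m$; shared events ($\Sigma_1\cap\Sigma_2$) move both components, events in $(\Sigma_1\setminus\Sigma_2)\cup\{\tau\}$ move only the first, events in $(\Sigma_2\setminus\Sigma_1)\cup\{\tau\}$ move only the second. Largest three-player observer $TPO(D,F)$ for deterministic $D=\langle\Sigma,X_D,\rightarrow_D,d_0\rangle$, $F=\langle\Sigma,X_F,\rightarrow_F,f_0\rangle$: with fresh symbol $\epsilon$ and fresh erasure symbols $\Sigma^r=\{\sigma\to\epsilon\mid\sigma\in\Sigma\}$, states are $Y$-states $(d,f)$, $Z$-states $Z((d,f),e)$ ($e\in\Sigma$, its observable component), $W$-states $W((d,f),a)$ ($a\in\Sigma\cup\Sigma^r$, its action component); initial state $(d_0,f_0)$; only reachable states; transitions exactly: (1) $(d,f)\xrightarrow{e}Z((d,f),e)$ if $e$ defined at $f$ in $F$; (2) $Z((d,f),e)\xrightarrow{\theta}Z((d',f),e)$ for $\theta\in\Sigma$ if $d\xrightarrow{\theta}_Dd'$; (3) $Z((d,f),e)\xrightarrow{\epsilon}W((d,f),e)$ if $e$ defined at $d$ in $D$ and at $f$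 in $F$; (4) $Z((d,f),e)\xrightarrow{e\to\epsilon}W((d,f),e\to\epsilon)$ if $e$ defined at $f$ in $F$; (5) $W((d,f),e)\xrightarrow{e}(d',f')$ with $d\xrightarrow{e}_Dd'$, $f\xrightarrow{e}_Ff'$; (6) $W((d,f),e\to\epsilon)\xrightarrow{e}(d,f')$ with $f\xrightarrow{e}_Ff'$. Transformed automaton: for a TPO $T_i$ over alphabet $\Sigma_i$ and the other index $j$, introduce fresh formal symbols $\theta_e$ and $\sigma_{a,w}$ (all distinct from each other and from events). Let $E_i$ be the set of observable components of $Z$-states of $T_i$ and $A_i$ the set of action components of its $W$-states. $G_i^T$ is the deterministic automaton with the states of $T_i$, initial state the initial $Y$-state, marked states all $Y$-states, and transitions: (a) $y\xrightarrow{e}z$ for each transition $y\xrightarrow{e}z$ of $T_i$ out of a $Y$-state; (b) $z\xrightarrow{\theta_e}q$ for each transition $z\xrightarrow{\theta}q$ of $T_i$ out of a $Z$-state $z$ with observable component $e$; (c) $w\xrightarrow{e_{a,w}}y$ for each transition $w\xrightarrow{e}y$ of $T_i$ out of a $W$-state with action component $a$; (d) a self-loop $y\xrightarrow{\alpha}y$ at every $Y$-state for every $\alpha\in\Sigma_j\setminus\Sigma_i$. Its alphabet is $\Sigma_{G_i^T}=\Sigma_i\cup(\Sigma_j\setminus\Sigma_i)\cup\{\theta_e\mid\theta\in\Sigma_i\cup\{\epsilon\}\cup\Sigma_i^r,\ e\in E_i\}\cup\{\sigma_{a,w}\mid\sigma\in\Sigma_i,\ a\in A_i\}\cup\{\beta_\alpha,\beta_{\alpha,w},\beta_{\alpha\to\epsilon,w}\mid\beta\in\Sigma_i\cap\Sigma_j,\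 \alpha\in\Sigma_j\setminus\Sigma_i\}$. Renaming: $\rho(e)=e$ for events, $\rho(\theta_e)=\theta$, $\rho(\sigma_{a,w})=\sigma$, extended letter-by-letter to strings. *)

theory Defs
  imports Main
begin

datatype 'e lab = Tau | Ev 'e

text \<open>Deterministic automata are the special case with one initial state, no Tau transitions
  and functional transitions; they use the same record.\<close>
record ('q, 'e) aut =
  a_alph   :: "'e set"
  a_states :: "'q set"
  a_trans  :: "('q \<times> 'e lab \<times> 'q) set"
  a_init   :: "'q set"
  a_marked :: "'q set"

definition wf_aut :: "('q, 'e) aut \<Rightarrow> bool" where
  "wf_aut G \<longleftrightarrow> finite (a_alph G)
     \<and> a_trans G \<subseteq> a_states G \<times> (insert Tau (Ev ` a_alph G)) \<times> a_states G
     \<and> a_init G \<subseteq> a_states G \<and> a_marked G \<subseteq> a_states G"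

definition deterministic :: "('q, 'e) aut \<Rightarrow> bool" where
  "deterministic G \<longleftrightarrow> (\<exists>q0. a_init G = {q0})
     \<and> (\<forall>p q. (p, Tau, q) \<notin> a_trans G)
     \<and> (\<forall>p l q q'. (p, l, q) \<in> a_trans G \<longrightarrow> (p, l, q') \<in> a_trans G \<longrightarrow> q = q')"

inductive wtrans :: "('q, 'e) aut \<Rightarrow> 'q \<Rightarrow> 'e list \<Rightarrow> 'q \<Rightarrow> bool" for G where
  wt_refl: "wtrans G p [] p"
| wt_tau:  "(p, Tau, p') \<in> a_trans G \<Longrightarrow> wtrans G p' s q \<Longrightarrow> wtrans G p s q"
| wt_ev:   "(p, Ev a, p') \<in> a_trans G \<Longrightarrow> wtrans G p' s q \<Longrightarrow> wtrans G p (a # s) q"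

inductive run :: "('q, 'e) aut \<Rightarrow> 'q \<Rightarrow> 'e list \<Rightarrow> 'q \<Rightarrow> bool" for G where
  run_nil:  "run G p [] p"
| run_cons: "(p, Ev a, p') \<in> a_trans G \<Longrightarrow> run G p' s q \<Longrightarrow> run G p (a # s) q"

definition UR :: "('q, 'e) aut \<Rightarrow> 'q set \<Rightarrow> 'q set" where
  "UR G B = {q. \<exists>b\<in>B. wtrans G b [] q}"

definition reachable_set :: "('q, 'e) aut \<Rightarrow> 'q set" where
  "reachable_set A = {q. \<exists>q0\<in>a_init A.
      (q0, q) \<in> {(p, p'). \<exists>l. (p, l, p') \<in> a_trans A}\<^sup>*}"

definition reach_part :: "('q, 'e) aut \<Rightarrow> ('q, 'e) aut" where
  "reach_part A = \<lparr> a_alph = a_alph A,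
                     a_states = a_states A \<inter> reachable_set A,
                     a_trans = {(p, l, q). (p, l, q) \<in> a_trans A \<and> p \<in> reachable_set A},
                     a_init = a_init A,
                     a_marked = a_marked A \<inter> reachable_set A \<rparr>"

definition delete_states :: "('q, 'e) aut \<Rightarrow> ('q \<Rightarrow> bool) \<Rightarrow> ('q, 'e) aut" where
  "delete_states A P = \<lparr> a_alph = a_alph A,
                     a_states = {q \<in> a_states A. \<not> P q},
                     a_trans = {(p, l, q). (p, l, q) \<in> a_trans A \<and> \<not> P p \<and> \<not> P q},
                     a_init = {q \<in> a_init A. \<not> P q},
                     a_marked = {q \<in> a_marked A. \<not> P q} \<rparr>"

definition desired_part :: "('q, 'e) aut \<Rightarrow> ('q \<Rightarrow> bool) \<Rightarrow> ('q, 'e) aut" where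
  "desired_part A P = reach_part (delete_states A P)"

definition post :: "('q, 'e) aut \<Rightarrow> 'q set \<Rightarrow> 'e \<Rightarrow> 'q set" where
  "post G X \<sigma> = {y. \<exists>x\<in>X. (x, Ev \<sigma>, y) \<in> a_trans G}"

definition det :: "('q, 'e) aut \<Rightarrow> ('q set, 'e) aut" where
  "det G = reach_part
     \<lparr> a_alph = a_alph G,
       a_states = Pow (a_states G),
       a_trans = {(X, Ev \<sigma>, Y) | X \<sigma> Y. \<sigma> \<in> a_alph G \<and> Y = UR G (post G X \<sigma>) \<and> Y \<noteq> {}},
       a_init = {UR G (a_init G)},
       a_marked = {X. X \<inter> a_marked G \<noteq> {}} \<rparr>"

definition det_d :: "('q, 'e) aut \<Rightarrow> 'q set \<Rightarrow> ('q set, 'e) aut" where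
  "det_d G S = desired_part (det G) (\<lambda>X. X \<subseteq> S)"

definition quot :: "('q, 'e) aut \<Rightarrow> ('q \<times> 'q) set \<Rightarrow> ('q set, 'e) aut" where
  "quot A r = \<lparr> a_alph = a_alph A,
                a_states = a_states A // r,
                a_trans = {(r``{x}, l, r``{y}) | x l y. (x, l, y) \<in> a_trans A},
                a_init = {r``{x} | x. x \<in> a_init A},
                a_marked = {r``{x} | x. x \<in> a_marked A} \<rparr>"

definition quot_set :: "('q \<times> 'q) set \<Rightarrow> 'q set \<Rightarrow> 'q set set" where
  "quot_set r S = {r``{x} | x. x \<in> S}"

definition bisimulation :: "('q, 'e) aut \<Rightarrow> ('q \<times> 'q) set \<Rightarrow> bool" where
  "bisimulation A r \<longleftrightarrow> equiv (a_states A) r \<and>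
     (\<forall>x1 x2. (x1, x2) \<in> r \<longrightarrow>
        (\<forall>l y1. (x1, l, y1) \<in> a_trans A \<longrightarrow> (\<exists>y2. (x2, l, y2) \<in> a_trans A \<and> (y2, y1) \<in> r)))"

definition opaque_obs_equiv :: "('q, 'e) aut \<Rightarrow> 'q set \<Rightarrow> ('q \<times> 'q) set \<Rightarrow> bool" where
  "opaque_obs_equiv G S r \<longleftrightarrow> equiv (a_states G) r \<and>
     (\<forall>x1 x2. (x1, x2) \<in> r \<longrightarrow>
        (\<forall>s y1. wtrans G x1 s y1 \<longrightarrow> (\<exists>y2. (y2, y1) \<in> r \<and> wtrans G x2 s y2))
        \<and> (x1 \<in> S \<longleftrightarrow> x2 \<in> S))"

text \<open>Opaque bisimulation on an observer whose states are sets of states; S are the secret states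
  of the underlying automaton.\<close>
definition opaque_bisim :: "('q set, 'e) aut \<Rightarrow> 'q set \<Rightarrow> ('q set \<times> 'q set) set \<Rightarrow> bool" where
  "opaque_bisim D S r \<longleftrightarrow> equiv (a_states D) r \<and>
     (\<forall>X1 X2. (X1, X2) \<in> r \<longrightarrow>
        (\<forall>s Y1. run D X1 s Y1 \<longrightarrow> (\<exists>Y2. (Y2, Y1) \<in> r \<and> run D X2 s Y2))
        \<and> (X1 \<subseteq> S \<longleftrightarrow> X2 \<subseteq> S))"

definition sync :: "('q1, 'e) aut \<Rightarrow> ('q2, 'e) aut \<Rightarrow> ('q1 \<times> 'q2, 'e) aut" where
  "sync A1 A2 = \<lparr> a_alph = a_alph A1 \<union> a_alph A2,
     a_states = a_states A1 \<times> a_states A2,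
     a_trans =
        {((x1, x2), Ev a, (y1, y2)) | x1 x2 a y1 y2.
            a \<in> a_alph A1 \<inter> a_alph A2 \<and> (x1, Ev a, y1) \<in> a_trans A1 \<and> (x2, Ev a, y2) \<in> a_trans A2}
      \<union> {((x1, x2), l, (y1, x2)) | x1 x2 l y1.
            (l = Tau \<or> (\<exists>a. l = Ev a \<and> a \<in> a_alph A1 - a_alph A2))
            \<and> (x1, l, y1) \<in> a_trans A1 \<and> x2 \<in> a_states A2}
      \<union> {((x1, x2), l, (x1, y2)) | x1 x2 l y2.
            (l = Tau \<or> (\<exists>a. l = Ev a \<and> a \<in> a_alph A2 - a_alph A1))
            \<and> (x2, l, y2) \<in> a_trans A2 \<and> x1 \<in> a_states A1},
     a_init = a_init A1 \<times> a_init A2,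
     a_marked = a_marked A1 \<times> a_marked A2 \<rparr>"

definition sync_secret :: "'q1 set \<Rightarrow> 'q2 set \<Rightarrow> ('q1 \<times> 'q2) set" where
  "sync_secret S1 S2 = {(x1, x2). x1 \<in> S1 \<or> x2 \<in> S2}"

text \<open>Labels of a TPO: events, the fresh symbol epsilon, erasure symbols (sigma -> epsilon).\<close>
datatype 'e tlab = TEv 'e | Eps | Erase 'e

datatype ('d, 'f, 'e) tstate = Y 'd 'f | Z 'd 'f 'e | W 'd 'f "'e tlab"

definition defined_at :: "('q, 'e) aut \<Rightarrow> 'e \<Rightarrow> 'q \<Rightarrow> bool" where
  "defined_at A e q \<longleftrightarrow> (\<exists>q'. (q, Ev e, q') \<in> a_trans A)"

definition tpo_trans :: "('d, 'e) aut \<Rightarrow> ('f, 'e) aut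
     \<Rightarrow> (('d, 'f, 'e) tstate \<times> 'e tlab lab \<times> ('d, 'f, 'e) tstate) set" where
  "tpo_trans D F =
      {(Y d f, Ev (TEv e), Z d f e) | d f e. defined_at F e f}
    \<union> {(Z d f e, Ev (TEv \<theta>), Z d' f e) | d f e \<theta> d'. (d, Ev \<theta>, d') \<in> a_trans D}
    \<union> {(Z d f e, Ev Eps, W d f (TEv e)) | d f e. defined_at D e d \<and> defined_at F e f}
    \<union> {(Z d f e, Ev (Erase e), W d f (Erase e)) | d f e. defined_at F e f}
    \<union> {(W d f (TEv e), Ev (TEv e), Y d' f') | d f e d' f'.
          (d, Ev e, d') \<in> a_trans D \<and> (f, Ev e, f') \<in> a_trans F}
    \<union> {(W d f (Erase e), Ev (TEv e), Y d f') | d f e f'. (f, Ev e, f') \<in> a_trans F}"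

definition TPO :: "('d, 'e) aut \<Rightarrow> ('f, 'e) aut \<Rightarrow> (('d, 'f, 'e) tstate, 'e tlab) aut" where
  "TPO D F = reach_part
     \<lparr> a_alph = TEv ` a_alph D \<union> {Eps} \<union> Erase ` a_alph D,
       a_states = UNIV,
       a_trans = tpo_trans D F,
       a_init = {Y d0 f0 | d0 f0. d0 \<in> a_init D \<and> f0 \<in> a_init F},
       a_marked = {} \<rparr>"

text \<open>Events of transformed automata: ordinary events, theta_e (Theta theta e), sigma_{a,w} (SigW sigma a).\<close>
datatype 'e xlab = XEv 'e | Theta "'e tlab" 'e | SigW 'e "'e tlab"

definition obs_comps :: "(('d, 'f, 'e) tstate, 'e tlab) aut \<Rightarrow> 'e set" where
  "obs_comps T = {e. \<exists>d f. Z d f e \<in> a_states T}"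

definition act_comps :: "(('d, 'f, 'e) tstate, 'e tlab) aut \<Rightarrow> 'e tlab set" where
  "act_comps T = {a. \<exists>d f. W d f a \<in> a_states T}"

text \<open>Transformed automaton of TPO T_i over Sigma_i, with Sigma_j the alphabet of the other component.\<close>
definition transformed :: "(('d, 'f, 'e) tstate, 'e tlab) aut \<Rightarrow> 'e set \<Rightarrow> 'e set
     \<Rightarrow> (('d, 'f, 'e) tstate, 'e xlab) aut" where
  "transformed T Si Sj = \<lparr>
     a_alph = XEv ` Si \<union> XEv ` (Sj - Si)
        \<union> {Theta \<theta> e | \<theta> e. \<theta> \<in> TEv ` Si \<union> {Eps} \<union> Erase ` Si \<and> e \<in> obs_comps T}
        \<union> {SigW \<sigma> a | \<sigma> a. \<sigma> \<in> Si \<and> a \<in> act_comps T}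
        \<union> {x. \<exists>\<beta> \<alpha>. \<beta> \<in> Si \<inter> Sj \<and> \<alpha> \<in> Sj - Si \<and>
               (x = Theta (TEv \<beta>) \<alpha> \<or> x = SigW \<beta> (TEv \<alpha>) \<or> x = SigW \<beta> (Erase \<alpha>))},
     a_states = a_states T,
     a_trans =
         {(Y d f, Ev (XEv e), q) | d f e q. (Y d f, Ev (TEv e), q) \<in> a_trans T}
       \<union> {(Z d f e, Ev (Theta \<theta> e), q) | d f e \<theta> q. (Z d f e, Ev \<theta>, q) \<in> a_trans T}
       \<union> {(W d f a, Ev (SigW \<sigma> a), q) | d f a \<sigma> q. (W d f a, Ev (TEv \<sigma>), q) \<in> a_trans T}
       \<union> {(Y d f, Ev (XEv \<alpha>), Y d f) | d f \<alpha>. Y d f \<in> a_states T \<and> \<alpha> \<in> Sj - Si},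
     a_init = a_init T,
     a_marked = {Y d f | d f. Y d f \<in> a_states T} \<rparr>"

fun rho :: "'e xlab \<Rightarrow> 'e tlab" where
  "rho (XEv e) = TEv e"
| "rho (Theta \<theta> e) = \<theta>"
| "rho (SigW \<sigma> a) = TEv \<sigma>"

definition H_ob :: "('q, 'e) aut \<Rightarrow> ('q \<times> 'q) set \<Rightarrow> ('q set set \<times> 'q set set) set
     \<Rightarrow> ('q set set set, 'e) aut" where
  "H_ob G oe ob = quot (det (quot G oe)) ob"

definition H_b :: "('q, 'e) aut \<Rightarrow> ('q \<times> 'q) set \<Rightarrow> ('q set set \<times> 'q set set) set
     \<Rightarrow> ('q set set set, 'e) aut" where
  "H_b G oe b = quot (det (quot G oe)) b"

definition H_obd :: "('q, 'e) aut \<Rightarrow> 'q set \<Rightarrow> ('q \<times> 'q) set \<Rightarrow> ('q set set \<times> 'q set set) set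
     \<Rightarrow> ('q set set set, 'e) aut" where
  "H_obd G S oe ob = desired_part (H_ob G oe ob) (\<lambda>C. \<exists>X\<in>C. X \<subseteq> quot_set oe S)"

definition local_TPO :: "('q, 'e) aut \<Rightarrow> 'q set \<Rightarrow> ('q \<times> 'q) set
     \<Rightarrow> ('q set set \<times> 'q set set) set \<Rightarrow> ('q set set \<times> 'q set set) set
     \<Rightarrow> (('q set set set, 'q set set set, 'e) tstate, 'e tlab) aut" where
  "local_TPO G S oe ob b = TPO (H_obd G S oe ob) (H_b G oe b)"

end

theory Submission
  imports Defs
begin

text \<open>The composition of the transformed local observers is simulated by the monolithic TPO,
  reading labels through rho. A global TPO state whose observer components are products
  X1 \<times> X2 and F1 \<times> F2 of unobservably closed sets is related to the pair of local TPO states whose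
  observer components are the classes of the images of Xi and Fi; a component whose alphabet
  misses the event being processed waits in a Y-state. Local observer steps are matched on the
  representing sets because the quotient is taken modulo an observation equivalence and the
  observers are then divided by bisimulations, while the observer of G1 || G2 moves componentwise
  on products. A class kept in the desired local observer contains a non-secret image, so the
  represented set is not secret, and the additional shared symbols of the transformed alphabets
  force both components to take part in every step that concerns both alphabets.\<close>

lemma wtrans_append: "wtrans G x s y \<Longrightarrow> wtrans G y t z \<Longrightarrow> wtrans G x (s @ t) z"
  by (induction rule: wtrans.induct) (auto intro: wtrans.intros)

lemma wtrans_ConsE:
  assumes "wtrans G x (a # s) z"
  obtains x' y where "wtrans G x [] x'" "(x', Ev a, y) \<in> a_trans G" "wtrans G y s z"
proof -
  have "wtrans G x s' z \<Longrightarrow> s' = a # s \<Longrightarrow>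
          \<exists>x' y. wtrans G x [] x' \<and> (x', Ev a, y) \<in> a_trans G \<and> wtrans G y s z" for s'
    by (induction rule: wtrans.induct) (auto intro: wtrans.intros)
  with assms that show thesis by blast
qed

lemma wtrans_states:
  "wtrans G x s y \<Longrightarrow> wf_aut G \<Longrightarrow> x \<in> a_states G \<Longrightarrow> y \<in> a_states G"
  by (induction rule: wtrans.induct) (auto simp: wf_aut_def)

lemma UR_idem [simp]: "UR G (UR G A) = UR G A"
  unfolding UR_def using wtrans_append[where s = "[]" and t = "[]"]
  by (fastforce intro: wtrans.intros)

lemma UR_subset_states: "wf_aut G \<Longrightarrow> A \<subseteq> a_states G \<Longrightarrow> UR G A \<subseteq> a_states G"
  unfolding UR_def using wtrans_states by fastforce

lemma post_subset_states: "wf_aut G \<Longrightarrow> post G X \<sigma> \<subseteq> a_states G"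
  unfolding post_def wf_aut_def by blast

lemma UR_post_subset_states: "wf_aut G \<Longrightarrow> UR G (post G X \<sigma>) \<subseteq> a_states G"
  by (simp add: UR_subset_states post_subset_states)

lemma reach_part_simps [simp]:
  "a_alph (reach_part A) = a_alph A"
  "a_states (reach_part A) = a_states A \<inter> reachable_set A"
  "a_trans (reach_part A) = {(p, l, q). (p, l, q) \<in> a_trans A \<and> p \<in> reachable_set A}"
  "a_init (reach_part A) = a_init A"
  by (simp_all add: reach_part_def)

lemma delete_states_simps [simp]:
  "a_alph (delete_states A P) = a_alph A"
  "a_trans (delete_states A P) = {(p, l, q). (p, l, q) \<in> a_trans A \<and> \<not> P p \<and> \<not> P q}"
  "a_init (delete_states A P) = {q \<in> a_init A. \<not> P q}"
  by (simp_all add: delete_states_def)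

lemma reachable_set_init: "q \<in> a_init A \<Longrightarrow> q \<in> reachable_set A"
  unfolding reachable_set_def by blast

lemma reachable_set_step: "p \<in> reachable_set A \<Longrightarrow> (p, l, q) \<in> a_trans A \<Longrightarrow> q \<in> reachable_set A"
  unfolding reachable_set_def by (blast intro: rtrancl_into_rtrancl)

lemma reachable_set_induct [consumes 1, case_names init step]:
  assumes "q \<in> reachable_set A"
    and "\<And>q0. q0 \<in> a_init A \<Longrightarrow> P q0"
    and "\<And>p l q. p \<in> reachable_set A \<Longrightarrow> P p \<Longrightarrow> (p, l, q) \<in> a_trans A \<Longrightarrow> P q"
  shows "P q"
proof -
  obtain q0 where q0: "q0 \<in> a_init A" and "(q0, q) \<in> {(p, p'). \<exists>l. (p, l, p') \<in> a_trans A}\<^sup>*"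
    using assms(1) unfolding reachable_set_def by blast
  from this(2) have "P q \<and> q \<in> reachable_set A"
    by (induction rule: rtrancl_induct)
      (use q0 in \<open>auto intro: assms(2,3) reachable_set_init reachable_set_step\<close>)
  then show ?thesis ..
qed

lemma reachable_set_reach_part [simp]: "reachable_set (reach_part A) = reachable_set A"
proof
  show "reachable_set (reach_part A) \<subseteq> reachable_set A"
  proof
    fix q assume "q \<in> reachable_set (reach_part A)"
    then show "q \<in> reachable_set A"
      by (induction rule: reachable_set_induct) (auto intro: reachable_set_init reachable_set_step)
  qed
  show "reachable_set A \<subseteq> reachable_set (reach_part A)"
  proof
    fix q assume "q \<in> reachable_set A"
    then show "q \<in> reachable_set (reach_part A)"
      by (induction rule: reachable_set_induct)
        (auto intro: reachable_set_init reachable_set_step[of _ "reach_part A"])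
  qed
qed

lemma reachable_set_delete_states:
  assumes "q \<in> reachable_set (delete_states A P)"
  shows "q \<in> reachable_set A" and "\<not> P q"
  using assms
  by (induction rule: reachable_set_induct) (auto intro: reachable_set_init reachable_set_step)

lemma det_simps [simp]:
  "a_alph (det G) = a_alph G"
  "a_init (det G) = {UR G (a_init G)}"
  by (simp_all add: det_def)

lemma det_states_iff: "X \<in> a_states (det G) \<longleftrightarrow> X \<subseteq> a_states G \<and> X \<in> reachable_set (det G)"
  by (simp add: det_def)

lemma det_trans_iff:
  "(X, l, V) \<in> a_trans (det G) \<longleftrightarrow> X \<in> reachable_set (det G) \<and>
     (\<exists>\<sigma>. l = Ev \<sigma> \<and> \<sigma> \<in> a_alph G \<and> V = UR G (post G X \<sigma>) \<and> V \<noteq> {})"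
  by (auto simp: det_def)

lemma det_trans_intro:
  "X \<in> reachable_set (det G) \<Longrightarrow> \<sigma> \<in> a_alph G \<Longrightarrow> UR G (post G X \<sigma>) \<noteq> {}
    \<Longrightarrow> (X, Ev \<sigma>, UR G (post G X \<sigma>)) \<in> a_trans (det G)"
  by (simp add: det_trans_iff)

lemma reachable_set_det_d:
  assumes "X \<in> reachable_set (det_d G S)"
  shows "X \<in> reachable_set (det G)" and "\<not> X \<subseteq> S"
  using assms reachable_set_delete_states[of X "det G" "\<lambda>X. X \<subseteq> S"]
  by (auto simp: det_d_def desired_part_def)

lemma det_d_trans_intro:
  assumes X: "X \<in> reachable_set (det_d G S)" and \<sigma>: "\<sigma> \<in> a_alph G"
    and public: "\<not> UR G (post G X \<sigma>) \<subseteq> S"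
  shows "(X, Ev \<sigma>, UR G (post G X \<sigma>)) \<in> a_trans (det_d G S)"
proof -
  have "(X, Ev \<sigma>, UR G (post G X \<sigma>)) \<in> a_trans (det G)"
    using det_trans_intro[OF reachable_set_det_d(1)[OF X] \<sigma>] public by blast
  with X reachable_set_det_d(2)[OF X] public show ?thesis
    by (simp add: det_d_def desired_part_def)
qed

lemma quot_simps [simp]:
  "a_alph (quot A r) = a_alph A"
  "a_states (quot A r) = a_states A // r"
  "a_trans (quot A r) = {(r``{x}, l, r``{y}) | x l y. (x, l, y) \<in> a_trans A}"
  "a_init (quot A r) = {r``{x} | x. x \<in> a_init A}"
  by (simp_all add: quot_def)

lemma quot_set_eq_empty_iff [simp]: "quot_set r X = {} \<longleftrightarrow> X = {}"
  unfolding quot_set_def by blast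

lemma quot_set_subset_quotient: "X \<subseteq> a_states G \<Longrightarrow> quot_set r X \<subseteq> a_states G // r"
  unfolding quot_set_def quotient_def by blast

lemma quot_trans: "(x, l, y) \<in> a_trans G \<Longrightarrow> (r``{x}, l, r``{y}) \<in> a_trans (quot G r)"
  by auto

lemma quot_wtrans: "wtrans G x s z \<Longrightarrow> wtrans (quot G r) (r``{x}) s (r``{z})"
  by (induction rule: wtrans.induct) (auto intro: wtrans.intros quot_trans simp del: quot_simps)

lemma opaque_obs_equiv_class_wtrans:
  assumes oe: "opaque_obs_equiv G S oe" and x: "x \<in> oe``{x0}" and w: "wtrans G x0 s y0"
  shows "\<exists>y. oe``{y} = oe``{y0} \<and> y \<in> a_states G \<and> wtrans G x s y"
proof -
  have eq: "equiv (a_states G) oe" using oe by (simp add: opaque_obs_equiv_def)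
  from x have "(x0, x) \<in> oe" by simp
  with oe w obtain y where "(y, y0) \<in> oe" "wtrans G x s y"
    unfolding opaque_obs_equiv_def by blast
  moreover have "oe``{y} = oe``{y0}" using equiv_class_eq[OF eq \<open>(y, y0) \<in> oe\<close>] .
  moreover have "y \<in> a_states G" using equiv_type[OF eq] \<open>(y, y0) \<in> oe\<close> by blast
  ultimately show ?thesis by blast
qed

text \<open>A weak transition of the quotient from the class of x is realised from x itself; this is
  where observation equivalence is needed.\<close>

lemma quot_wtrans_lift:
  assumes oe: "opaque_obs_equiv G S oe"
  shows "wtrans (quot G oe) C s C' \<Longrightarrow> C = oe``{x} \<Longrightarrow> x \<in> a_states G
     \<Longrightarrow> \<exists>z. C' = oe``{z} \<and> wtrans G x s z"
proof (induction arbitrary: x rule: wtrans.induct)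
  case (wt_refl C)
  then show ?case by (blast intro: wtrans.intros)
next
  case (wt_tau C C1 s C')
  obtain x0 y0 where C: "C = oe``{x0}" and C1: "C1 = oe``{y0}" and tr: "(x0, Tau, y0) \<in> a_trans G"
    using wt_tau.hyps(1) by auto
  have "x \<in> oe``{x0}"
    using equiv_class_self[of "a_states G" oe x] oe wt_tau.prems C by (simp add: opaque_obs_equiv_def)
  moreover have "wtrans G x0 [] y0" using tr by (blast intro: wtrans.intros)
  ultimately obtain y where "oe``{y} = C1" "y \<in> a_states G" "wtrans G x [] y"
    using opaque_obs_equiv_class_wtrans[OF oe] C1 by blast
  with wt_tau.IH show ?case using wtrans_append by fastforce
next
  case (wt_ev C a C1 s C')
  obtain x0 y0 where C: "C = oe``{x0}" and C1: "C1 = oe``{y0}" and tr: "(x0, Ev a, y0) \<in> a_trans G"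
    using wt_ev.hyps(1) by auto
  have "x \<in> oe``{x0}"
    using equiv_class_self[of "a_states G" oe x] oe wt_ev.prems C by (simp add: opaque_obs_equiv_def)
  moreover have "wtrans G x0 [a] y0" using tr by (blast intro: wtrans.intros)
  ultimately obtain y where "oe``{y} = C1" "y \<in> a_states G" "wtrans G x [a] y"
    using opaque_obs_equiv_class_wtrans[OF oe] C1 by blast
  with wt_ev.IH show ?case using wtrans_append by fastforce
qed

lemma UR_quot_set:
  assumes oe: "opaque_obs_equiv G S oe" and A: "A \<subseteq> a_states G"
  shows "UR (quot G oe) (quot_set oe A) = quot_set oe (UR G A)"
proof
  show "UR (quot G oe) (quot_set oe A) \<subseteq> quot_set oe (UR G A)"
  proof
    fix C assume "C \<in> UR (quot G oe) (quot_set oe A)"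
    then obtain x where x: "x \<in> A" "wtrans (quot G oe) (oe``{x}) [] C"
      unfolding UR_def quot_set_def by blast
    then obtain z where "C = oe``{z}" "wtrans G x [] z"
      using quot_wtrans_lift[OF oe x(2) refl] A by blast
    with x(1) show "C \<in> quot_set oe (UR G A)" unfolding UR_def quot_set_def by blast
  qed
  show "quot_set oe (UR G A) \<subseteq> UR (quot G oe) (quot_set oe A)"
    unfolding UR_def quot_set_def by (blast intro: quot_wtrans)
qed

lemma UR_post_quot_set:
  assumes oe: "opaque_obs_equiv G S oe"
    and X: "X \<subseteq> a_states G" "UR G X = X"
  shows "UR (quot G oe) (post (quot G oe) (quot_set oe X) \<sigma>) = quot_set oe (UR G (post G X \<sigma>))"
proof
  show "UR (quot G oe) (post (quot G oe) (quot_set oe X) \<sigma>) \<subseteq> quot_set oe (UR G (post G X \<sigma>))"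
  proof
    fix C assume "C \<in> UR (quot G oe) (post (quot G oe) (quot_set oe X) \<sigma>)"
    then obtain x C1 where x: "x \<in> X" "(oe``{x}, Ev \<sigma>, C1) \<in> a_trans (quot G oe)"
        "wtrans (quot G oe) C1 [] C"
      unfolding UR_def quot_set_def post_def by blast
    then have "wtrans (quot G oe) (oe``{x}) [\<sigma>] C" by (blast intro: wtrans.intros)
    then obtain z where z: "C = oe``{z}" "wtrans G x [\<sigma>] z"
      using quot_wtrans_lift[OF oe _ refl] X(1) x(1) by blast
    then obtain x' y where "wtrans G x [] x'" "(x', Ev \<sigma>, y) \<in> a_trans G" "wtrans G y [] z"
      by (elim wtrans_ConsE)
    moreover have "x' \<in> X" using X(2) x(1) \<open>wtrans G x [] x'\<close> unfolding UR_def by blast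
    ultimately show "C \<in> quot_set oe (UR G (post G X \<sigma>))"
      using z(1) unfolding quot_set_def UR_def post_def by blast
  qed
  show "quot_set oe (UR G (post G X \<sigma>)) \<subseteq> UR (quot G oe) (post (quot G oe) (quot_set oe X) \<sigma>)"
    unfolding quot_set_def UR_def post_def quot_simps by (blast intro: quot_wtrans)
qed

lemma det_quot_trans_from:
  assumes oe: "opaque_obs_equiv G S oe"
    and X: "X \<subseteq> a_states G" "UR G X = X"
    and tr: "(quot_set oe X, l, V) \<in> a_trans (det (quot G oe))"
  obtains \<sigma> where "l = Ev \<sigma>" "\<sigma> \<in> a_alph G" "V = quot_set oe (UR G (post G X \<sigma>))"
    "UR G (post G X \<sigma>) \<noteq> {}" "V \<in> reachable_set (det (quot G oe))"
proof -
  obtain \<sigma> where l: "l = Ev \<sigma>" "\<sigma> \<in> a_alph G"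
    and V: "V = UR (quot G oe) (post (quot G oe) (quot_set oe X) \<sigma>)" "V \<noteq> {}"
    using tr det_trans_iff[of "quot_set oe X" l V "quot G oe"] by auto
  have V': "V = quot_set oe (UR G (post G X \<sigma>))"
    using V(1) UR_post_quot_set[OF oe X] by simp
  with V(2) have ne: "UR G (post G X \<sigma>) \<noteq> {}" by simp
  have "quot_set oe X \<in> reachable_set (det (quot G oe))"
    using tr by (simp add: det_trans_iff)
  then have "V \<in> reachable_set (det (quot G oe))" using tr by (rule reachable_set_step)
  with l V' ne show thesis by (rule that)
qed

section \<open>Representing observer states by sets of states\<close>

definition represents :: "('q, 'e) aut \<Rightarrow> ('q \<times> 'q) set \<Rightarrow> ('q set set \<times> 'q set set) set
    \<Rightarrow> 'q set set set \<Rightarrow> 'q set \<Rightarrow> bool" where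
  "represents G oe r C X \<longleftrightarrow> X \<subseteq> a_states G \<and> UR G X = X \<and> X \<noteq> {}
     \<and> quot_set oe X \<in> reachable_set (det (quot G oe)) \<and> C = r``{quot_set oe X}"

lemma represents_step:
  assumes wf: "wf_aut G" and oe: "opaque_obs_equiv G S oe"
    and r: "bisimulation (det (quot G oe)) r"
    and rep: "represents G oe r C X"
    and tr: "(C, Ev \<sigma>, C') \<in> a_trans (quot (det (quot G oe)) r)"
  shows "\<sigma> \<in> a_alph G \<and> represents G oe r C' (UR G (post G X \<sigma>))"
proof -
  let ?D = "det (quot G oe)"
  have X: "X \<subseteq> a_states G" "UR G X = X" "quot_set oe X \<in> reachable_set ?D"
    and C: "C = r``{quot_set oe X}"
    using rep by (auto simp: represents_def)
  have eq: "equiv (a_states ?D) r" using r by (simp add: bisimulation_def)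
  have "quot_set oe X \<in> a_states ?D"
    using X quot_set_subset_quotient by (simp add: det_states_iff)
  then have Xq: "quot_set oe X \<in> C" using C equiv_class_self[OF eq] by blast
  obtain X0 X0' where C0: "C = r``{X0}" and C': "C' = r``{X0'}"
    and tr0: "(X0, Ev \<sigma>, X0') \<in> a_trans ?D"
    using tr by auto
  have "(X0, quot_set oe X) \<in> r" using Xq C0 by simp
  with r tr0 obtain V where V: "(quot_set oe X, Ev \<sigma>, V) \<in> a_trans ?D" "(V, X0') \<in> r"
    unfolding bisimulation_def by blast
  obtain \<sigma>' where "Ev \<sigma> = Ev \<sigma>'" "\<sigma>' \<in> a_alph G" "V = quot_set oe (UR G (post G X \<sigma>'))"
    "UR G (post G X \<sigma>') \<noteq> {}" "V \<in> reachable_set ?D"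
    by (rule det_quot_trans_from[OF oe X(1,2) V(1)])
  moreover have "C' = r``{V}" using C' V(2) equiv_class_eq[OF eq] by simp
  ultimately show ?thesis
    using UR_post_subset_states[OF wf] by (simp add: represents_def)
qed

lemma opaque_bisim_bisimulation:
  assumes "opaque_bisim (det G) S r"
  shows "bisimulation (det G) r"
  unfolding bisimulation_def
proof (intro conjI allI impI)
  show "equiv (a_states (det G)) r" using assms by (simp add: opaque_bisim_def)
next
  fix X1 X2 l V1
  assume r: "(X1, X2) \<in> r" and tr: "(X1, l, V1) \<in> a_trans (det G)"
  then obtain \<sigma> where l: "l = Ev \<sigma>" by (auto simp: det_trans_iff)
  with tr have "run (det G) X1 [\<sigma>] V1" by (blast intro: run.intros)
  with assms r obtain V2 where "(V2, V1) \<in> r" "run (det G) X2 [\<sigma>] V2"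
    unfolding opaque_bisim_def by blast
  with l show "\<exists>V2. (X2, l, V2) \<in> a_trans (det G) \<and> (V2, V1) \<in> r"
    by (blast elim: run.cases)
qed

lemma quot_set_mono: "A \<subseteq> B \<Longrightarrow> quot_set r A \<subseteq> quot_set r B"
  unfolding quot_set_def by blast

lemma H_obd_step:
  assumes wf: "wf_aut G" and oe: "opaque_obs_equiv G S oe"
    and ob: "opaque_bisim (det (quot G oe)) (quot_set oe S) ob"
    and rep: "represents G oe ob C X"
    and tr: "(C, Ev \<sigma>, C') \<in> a_trans (H_obd G S oe ob)"
  shows "\<sigma> \<in> a_alph G \<and> represents G oe ob C' (UR G (post G X \<sigma>)) \<and> \<not> UR G (post G X \<sigma>) \<subseteq> S"
proof -
  have tr': "(C, Ev \<sigma>, C') \<in> a_trans (quot (det (quot G oe)) ob)"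
    and kept: "\<forall>V\<in>C'. \<not> V \<subseteq> quot_set oe S"
    using tr unfolding H_obd_def desired_part_def H_ob_def reach_part_simps delete_states_simps
    by blast+
  have step: "\<sigma> \<in> a_alph G" "represents G oe ob C' (UR G (post G X \<sigma>))"
    using represents_step[OF wf oe opaque_bisim_bisimulation[OF ob] rep tr'] by blast+
  have eq: "equiv (a_states (det (quot G oe))) ob" using ob by (simp add: opaque_bisim_def)
  let ?V = "quot_set oe (UR G (post G X \<sigma>))"
  have "?V \<in> a_states (det (quot G oe))"
    using step(2) quot_set_subset_quotient[of "UR G (post G X \<sigma>)" G oe]
    by (simp add: represents_def det_states_iff)
  then have "?V \<in> C'" using step(2) equiv_class_self[OF eq] by (simp add: represents_def)
  then have "\<not> UR G (post G X \<sigma>) \<subseteq> S"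
    using kept quot_set_mono[of "UR G (post G X \<sigma>)" S oe] by blast
  with step show ?thesis by blast
qed

lemma H_b_step:
  assumes "wf_aut G" and "opaque_obs_equiv G S oe" and "bisimulation (det (quot G oe)) b"
    and "represents G oe b C X" and "(C, Ev \<sigma>, C') \<in> a_trans (H_b G oe b)"
  shows "\<sigma> \<in> a_alph G \<and> represents G oe b C' (UR G (post G X \<sigma>))"
  using represents_step assms by (simp add: H_b_def)

lemma represents_init:
  assumes wf: "wf_aut G" and oe: "opaque_obs_equiv G S oe" and ne: "UR G (a_init G) \<noteq> {}"
    and C: "C \<in> a_init (quot (det (quot G oe)) r)"
  shows "represents G oe r C (UR G (a_init G))"
proof -
  have i: "a_init G \<subseteq> a_states G" using wf by (simp add: wf_aut_def)
  have "a_init (quot G oe) = quot_set oe (a_init G)" by (auto simp: quot_set_def)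
  then have "a_init (det (quot G oe)) = {quot_set oe (UR G (a_init G))}"
    by (simp add: UR_quot_set[OF oe i])
  then have "quot_set oe (UR G (a_init G)) \<in> reachable_set (det (quot G oe))"
    by (simp add: reachable_set_init)
  moreover have "C = r``{quot_set oe (UR G (a_init G))}"
    using C \<open>a_init (det (quot G oe)) = _\<close> by auto
  ultimately show ?thesis
    using UR_subset_states[OF wf i] ne by (simp add: represents_def)
qed

lemma H_obd_init:
  assumes "wf_aut G" and "opaque_obs_equiv G S oe" and "\<not> UR G (a_init G) \<subseteq> S"
    and "C \<in> a_init (H_obd G S oe ob)"
  shows "represents G oe ob C (UR G (a_init G))"
  using assms represents_init[of G S oe C ob]
  by (auto simp: H_obd_def H_ob_def desired_part_def)

lemma H_b_init:
  assumes "wf_aut G" and "opaque_obs_equiv G S oe" and "\<not> UR G (a_init G) \<subseteq> S"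
    and "C \<in> a_init (H_b G oe b)"
  shows "represents G oe b C (UR G (a_init G))"
  using assms represents_init[of G S oe C b] by (auto simp: H_b_def)

lemma sync_simps [simp]:
  "a_alph (sync A1 A2) = a_alph A1 \<union> a_alph A2"
  "a_states (sync A1 A2) = a_states A1 \<times> a_states A2"
  "a_init (sync A1 A2) = a_init A1 \<times> a_init A2"
  by (simp_all add: sync_def)

lemma sync_Tau_iff:
  "((x1, x2), Tau, (y1, y2)) \<in> a_trans (sync A1 A2) \<longleftrightarrow>
     (x1, Tau, y1) \<in> a_trans A1 \<and> y2 = x2 \<and> x2 \<in> a_states A2
   \<or> (x2, Tau, y2) \<in> a_trans A2 \<and> y1 = x1 \<and> x1 \<in> a_states A1"
  by (auto simp: sync_def)

definition participates :: "('q, 'e) aut \<Rightarrow> 'q \<Rightarrow> 'e \<Rightarrow> 'q \<Rightarrow> bool" where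
  "participates A q a q' \<longleftrightarrow>
     (if a \<in> a_alph A then (q, Ev a, q') \<in> a_trans A else q' = q \<and> q \<in> a_states A)"

lemma sync_Ev_trans:
  assumes "((q1, q2), Ev a, (q1', q2')) \<in> a_trans (sync A1 A2)"
  shows "a \<in> a_alph A1 \<union> a_alph A2" and "participates A1 q1 a q1'" and "participates A2 q2 a q2'"
  using assms by (auto simp: sync_def participates_def)

lemma sync_wtrans_left:
  "wtrans A1 x s y \<Longrightarrow> s = [] \<Longrightarrow> z \<in> a_states A2 \<Longrightarrow> wtrans (sync A1 A2) (x, z) [] (y, z)"
  by (induction rule: wtrans.induct) (auto intro: wtrans.wt_refl wtrans.wt_tau[OF iffD2[OF sync_Tau_iff]])

lemma sync_wtrans_right:
  "wtrans A2 x s y \<Longrightarrow> s = [] \<Longrightarrow> z \<in> a_states A1 \<Longrightarrow> wtrans (sync A1 A2) (z, x) [] (z, y)"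
  by (induction rule: wtrans.induct) (auto intro: wtrans.wt_refl wtrans.wt_tau[OF iffD2[OF sync_Tau_iff]])

lemma sync_wtrans_Nil:
  assumes wf1: "wf_aut A1" and wf2: "wf_aut A2"
  shows "wtrans (sync A1 A2) p s q \<Longrightarrow> s = [] \<Longrightarrow> p \<in> a_states A1 \<times> a_states A2
    \<Longrightarrow> wtrans A1 (fst p) [] (fst q) \<and> wtrans A2 (snd p) [] (snd q)"
proof (induction rule: wtrans.induct)
  case (wt_refl p)
  then show ?case by (simp add: wtrans.wt_refl)
next
  case (wt_tau p p' s q)
  then have "p' \<in> a_states A1 \<times> a_states A2"
    using wf1 wf2 by (cases p, cases p') (auto simp: sync_Tau_iff wf_aut_def)
  with wt_tau show ?case by (cases p, cases p') (auto simp: sync_Tau_iff intro: wtrans.intros)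
next
  case (wt_ev p a p' s q)
  then show ?case by simp
qed

lemma UR_sync:
  assumes wf1: "wf_aut A1" and wf2: "wf_aut A2"
    and A: "A \<subseteq> a_states A1" and B: "B \<subseteq> a_states A2"
  shows "UR (sync A1 A2) (A \<times> B) = UR A1 A \<times> UR A2 B"
proof
  show "UR (sync A1 A2) (A \<times> B) \<subseteq> UR A1 A \<times> UR A2 B"
    using sync_wtrans_Nil[OF wf1 wf2] A B unfolding UR_def by fastforce
  show "UR A1 A \<times> UR A2 B \<subseteq> UR (sync A1 A2) (A \<times> B)"
  proof
    fix q assume "q \<in> UR A1 A \<times> UR A2 B"
    then obtain a b y z where q: "q = (y, z)" "a \<in> A" "b \<in> B" "wtrans A1 a [] y" "wtrans A2 b [] z"
      unfolding UR_def by blast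
    have "y \<in> a_states A1" using wtrans_states[OF q(4) wf1] q(2) A by blast
    then have "wtrans (sync A1 A2) (a, b) ([] @ []) (y, z)"
      using q B by (blast intro: wtrans_append sync_wtrans_left sync_wtrans_right)
    with q show "q \<in> UR (sync A1 A2) (A \<times> B)" unfolding UR_def by auto
  qed
qed

lemma post_sync:
  assumes "A \<subseteq> a_states A1" and "B \<subseteq> a_states A2" and "\<sigma> \<in> a_alph A1 \<union> a_alph A2"
  shows "post (sync A1 A2) (A \<times> B) \<sigma> =
     (if \<sigma> \<in> a_alph A1 then post A1 A \<sigma> else A) \<times> (if \<sigma> \<in> a_alph A2 then post A2 B \<sigma> else B)"
  using assms by (auto simp: post_def sync_def)

definition obs_succ :: "('q, 'e) aut \<Rightarrow> 'q set \<Rightarrow> 'e \<Rightarrow> 'q set" where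
  "obs_succ G X \<sigma> = (if \<sigma> \<in> a_alph G then UR G (post G X \<sigma>) else X)"

lemma UR_post_sync:
  assumes wf1: "wf_aut G1" and wf2: "wf_aut G2"
    and X1: "X1 \<subseteq> a_states G1" "UR G1 X1 = X1" and X2: "X2 \<subseteq> a_states G2" "UR G2 X2 = X2"
    and \<sigma>: "\<sigma> \<in> a_alph G1 \<union> a_alph G2"
  shows "UR (sync G1 G2) (post (sync G1 G2) (X1 \<times> X2) \<sigma>) = obs_succ G1 X1 \<sigma> \<times> obs_succ G2 X2 \<sigma>"
proof -
  have "(if \<sigma> \<in> a_alph G1 then post G1 X1 \<sigma> else X1) \<subseteq> a_states G1"
    using X1 post_subset_states[OF wf1] by auto
  moreover have "(if \<sigma> \<in> a_alph G2 then post G2 X2 \<sigma> else X2) \<subseteq> a_states G2"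
    using X2 post_subset_states[OF wf2] by auto
  ultimately show ?thesis
    using X1 X2 by (simp add: post_sync[OF X1(1) X2(1) \<sigma>] UR_sync[OF wf1 wf2] obs_succ_def)
qed

lemma det_sync_trans_intro:
  assumes wf1: "wf_aut G1" and wf2: "wf_aut G2"
    and reach: "F1 \<times> F2 \<in> reachable_set (det (sync G1 G2))"
    and F1: "F1 \<subseteq> a_states G1" "UR G1 F1 = F1" and F2: "F2 \<subseteq> a_states G2" "UR G2 F2 = F2"
    and \<sigma>: "\<sigma> \<in> a_alph G1 \<union> a_alph G2"
    and ne: "obs_succ G1 F1 \<sigma> \<noteq> {}" "obs_succ G2 F2 \<sigma> \<noteq> {}"
  shows "(F1 \<times> F2, Ev \<sigma>, obs_succ G1 F1 \<sigma> \<times> obs_succ G2 F2 \<sigma>) \<in> a_trans (det (sync G1 G2))"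
  using det_trans_intro[OF reach, of \<sigma>] ne \<sigma> by (simp add: UR_post_sync[OF wf1 wf2 F1 F2 \<sigma>])

lemma product_not_subset_sync_secret:
  "\<not> A \<subseteq> S1 \<Longrightarrow> \<not> B \<subseteq> S2 \<Longrightarrow> \<not> A \<times> B \<subseteq> sync_secret S1 S2"
  unfolding sync_secret_def by blast

lemma det_d_sync_trans_intro:
  assumes wf1: "wf_aut G1" and wf2: "wf_aut G2"
    and reach: "X1 \<times> X2 \<in> reachable_set (det_d (sync G1 G2) (sync_secret S1 S2))"
    and X1: "X1 \<subseteq> a_states G1" "UR G1 X1 = X1" and X2: "X2 \<subseteq> a_states G2" "UR G2 X2 = X2"
    and \<sigma>: "\<sigma> \<in> a_alph G1 \<union> a_alph G2"
    and public: "\<not> obs_succ G1 X1 \<sigma> \<subseteq> S1" "\<not> obs_succ G2 X2 \<sigma> \<subseteq> S2"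
  shows "(X1 \<times> X2, Ev \<sigma>, obs_succ G1 X1 \<sigma> \<times> obs_succ G2 X2 \<sigma>)
           \<in> a_trans (det_d (sync G1 G2) (sync_secret S1 S2))"
  using det_d_trans_intro[OF reach, of \<sigma>] \<sigma> product_not_subset_sync_secret[OF public]
  by (simp add: UR_post_sync[OF wf1 wf2 X1 X2 \<sigma>])

fun d_of :: "('d, 'f, 'e) tstate \<Rightarrow> 'd" where
  "d_of (Y d f) = d" | "d_of (Z d f e) = d" | "d_of (W d f a) = d"

fun f_of :: "('d, 'f, 'e) tstate \<Rightarrow> 'f" where
  "f_of (Y d f) = f" | "f_of (Z d f e) = f" | "f_of (W d f a) = f"

lemma TPO_init: "a_init (TPO D F) = {Y d0 f0 | d0 f0. d0 \<in> a_init D \<and> f0 \<in> a_init F}"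
  by (simp add: TPO_def)

lemma TPO_trans_iff:
  "(t, l, t') \<in> a_trans (TPO D F) \<longleftrightarrow> (t, l, t') \<in> tpo_trans D F \<and> t \<in> reachable_set (TPO D F)"
  by (simp add: TPO_def)

lemma TPO_states: "a_states (TPO D F) = reachable_set (TPO D F)"
  by (simp add: TPO_def)

lemma tpo_trans_Y:
  "(Y d f, l, q) \<in> tpo_trans D F \<longleftrightarrow> (\<exists>e. l = Ev (TEv e) \<and> defined_at F e f \<and> q = Z d f e)"
  unfolding tpo_trans_def by auto

lemma tpo_trans_Z:
  "(Z d f e, l, q) \<in> tpo_trans D F \<longleftrightarrow>
     (\<exists>\<theta> d'. l = Ev (TEv \<theta>) \<and> (d, Ev \<theta>, d') \<in> a_trans D \<and> q = Z d' f e)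
   \<or> l = Ev Eps \<and> defined_at D e d \<and> defined_at F e f \<and> q = W d f (TEv e)
   \<or> l = Ev (Erase e) \<and> defined_at F e f \<and> q = W d f (Erase e)"
  unfolding tpo_trans_def by auto

lemma tpo_trans_W:
  "(W d f a, l, q) \<in> tpo_trans D F \<longleftrightarrow>
     (\<exists>e d' f'. a = TEv e \<and> l = Ev (TEv e) \<and> (d, Ev e, d') \<in> a_trans D \<and> (f, Ev e, f') \<in> a_trans F
        \<and> q = Y d' f')
   \<or> (\<exists>e f'. a = Erase e \<and> l = Ev (TEv e) \<and> (f, Ev e, f') \<in> a_trans F \<and> q = Y d f')"
  unfolding tpo_trans_def by auto

lemma reachable_set_TPO_components:
  assumes "t \<in> reachable_set (TPO D F)"
  shows "d_of t \<in> reachable_set D \<and> f_of t \<in> reachable_set F"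
  using assms
proof (induction rule: reachable_set_induct)
  case (init t0)
  then show ?case by (auto simp: TPO_init intro: reachable_set_init)
next
  case (step t l t')
  then have "(t, l, t') \<in> tpo_trans D F" by (simp add: TPO_trans_iff)
  with step.IH show ?case
    unfolding tpo_trans_def by (auto intro: reachable_set_step)
qed

lemma transformed_simps [simp]:
  "a_states (transformed T Si Sj) = a_states T"
  "a_init (transformed T Si Sj) = a_init T"
  by (simp_all add: transformed_def)

lemma transformed_trans_Y:
  "(Y d f, Ev x, q) \<in> a_trans (transformed T Si Sj) \<longleftrightarrow>
     (\<exists>e. x = XEv e \<and> (Y d f, Ev (TEv e), q) \<in> a_trans T)
   \<or> (\<exists>\<alpha>. x = XEv \<alpha> \<and> \<alpha> \<in> Sj - Si \<and> q = Y d f \<and> Y d f \<in> a_states T)"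
  by (auto simp: transformed_def)

lemma transformed_trans_Z:
  "(Z d f e, Ev x, q) \<in> a_trans (transformed T Si Sj) \<longleftrightarrow>
     (\<exists>\<theta>. x = Theta \<theta> e \<and> (Z d f e, Ev \<theta>, q) \<in> a_trans T)"
  by (auto simp: transformed_def)

lemma transformed_trans_W:
  "(W d f a, Ev x, q) \<in> a_trans (transformed T Si Sj) \<longleftrightarrow>
     (\<exists>\<sigma>. x = SigW \<sigma> a \<and> (W d f a, Ev (TEv \<sigma>), q) \<in> a_trans T)"
  by (auto simp: transformed_def)

lemma transformed_XEv_source:
  "(q, Ev (XEv e), q') \<in> a_trans (transformed T Si Sj) \<Longrightarrow> \<exists>d f. q = Y d f"
  by (cases q) (auto simp: transformed_trans_Z transformed_trans_W)

lemma XEv_in_transformed_alph: "XEv e \<in> a_alph (transformed T Si Sj) \<longleftrightarrow> e \<in> Si \<union> Sj"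
  by (auto simp: transformed_def)

lemma Theta_in_transformed_alph:
  "Theta \<theta> e \<in> a_alph (transformed T Si Sj) \<longleftrightarrow>
     \<theta> \<in> TEv ` Si \<union> {Eps} \<union> Erase ` Si \<and> e \<in> obs_comps T
   \<or> (\<exists>\<beta>. \<theta> = TEv \<beta> \<and> \<beta> \<in> Si \<inter> Sj \<and> e \<in> Sj - Si)"
  by (auto simp: transformed_def)

lemma SigW_in_transformed_alph:
  "\<sigma> \<in> Si \<Longrightarrow> a \<in> act_comps T \<Longrightarrow> SigW \<sigma> a \<in> a_alph (transformed T Si Sj)"
  by (auto simp: transformed_def)

section \<open>Components of the composition\<close>

text \<open>The state of a transformed local observer that accompanies a global TPO state: a
  component whose alphabet misses the event being processed waits in a Y-state.\<close>

fun local_view :: "'e set \<Rightarrow> 'd \<Rightarrow> 'f \<Rightarrow> ('a, 'b, 'e) tstate \<Rightarrow> ('d, 'f, 'e) tstate" where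
  "local_view U d f (Y _ _) = Y d f"
| "local_view U d f (Z _ _ e) = (if e \<in> U then Z d f e else Y d f)"
| "local_view U d f (W _ _ (TEv e)) = (if e \<in> U then W d f (TEv e) else Y d f)"
| "local_view U d f (W _ _ (Erase e)) = (if e \<in> U then W d f (Erase e) else Y d f)"
| "local_view U d f (W _ _ Eps) = Y d f"

fun pending_in :: "'e set \<Rightarrow> ('a, 'b, 'e) tstate \<Rightarrow> bool" where
  "pending_in U (Y _ _) = True"
| "pending_in U (Z _ _ e) = (e \<in> U)"
| "pending_in U (W _ _ (TEv e)) = (e \<in> U)"
| "pending_in U (W _ _ (Erase e)) = (e \<in> U)"
| "pending_in U (W _ _ Eps) = False"

lemma local_view_eq_Y:
  "local_view U d f t = Y d' f' \<Longrightarrow> pending_in U t \<Longrightarrow> \<exists>d0 f0. t = Y d0 f0"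
  by (induction U t rule: pending_in.induct) (auto split: if_splits)

text \<open>One component of the composition; Sj is the alphabet of the other one.\<close>

locale component =
  fixes G :: "('q, 'e) aut" and S :: "'q set" and oe :: "('q \<times> 'q) set"
    and ob b :: "('q set set \<times> 'q set set) set" and Sj :: "'e set"
  assumes wf: "wf_aut G" and oe: "opaque_obs_equiv G S oe"
    and ob: "opaque_bisim (det (quot G oe)) (quot_set oe S) ob"
    and b: "bisimulation (det (quot G oe)) b"
begin

abbreviation local_T :: "(('q set set set, 'q set set set, 'e) tstate, 'e tlab) aut" where
  "local_T \<equiv> local_TPO G S oe ob b"

abbreviation G_T :: "(('q set set set, 'q set set set, 'e) tstate, 'e xlab) aut" where
  "G_T \<equiv> transformed local_T (a_alph G) Sj"

definition view :: "('a, 'b, 'e) tstate \<Rightarrow> ('q set set set, 'q set set set, 'e) tstate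
    \<Rightarrow> 'q set \<Rightarrow> 'q set \<Rightarrow> bool" where
  "view t q X F \<longleftrightarrow> (\<exists>d f. represents G oe ob d X \<and> \<not> X \<subseteq> S \<and> represents G oe b f F
      \<and> q = local_view (a_alph G) d f t)"

lemma view_setsD:
  assumes "view t q X F"
  shows "X \<subseteq> a_states G" "UR G X = X" "\<not> X \<subseteq> S" "F \<subseteq> a_states G" "UR G F = F" "F \<noteq> {}"
  using assms by (auto simp: view_def represents_def)

lemma local_T_trans:
  "(t, l, t') \<in> a_trans local_T \<Longrightarrow>
     (t, l, t') \<in> tpo_trans (H_obd G S oe ob) (H_b G oe b) \<and> t \<in> a_states local_T"
  by (simp add: local_TPO_def TPO_trans_iff TPO_states)

lemma view_waiting:
  assumes "view t q X F" and "\<not> pending_in (a_alph G) t"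
  obtains dl fl where "q = Y dl fl"
  using assms by (induction "a_alph G" t rule: pending_in.induct) (auto simp: view_def)

lemma view_busy:
  assumes "view t q X F" and "q = Y dl fl" and "pending_in (a_alph G) t"
  shows "\<exists>d f. t = Y d f"
proof -
  obtain d f where "q = local_view (a_alph G) d f t" using assms(1) by (auto simp: view_def)
  with assms(2,3) show ?thesis by (metis local_view_eq_Y)
qed

lemma move_from_Y:
  assumes v: "view (Y d f) q X F" and tr: "(q, Ev x, q') \<in> a_trans G_T"
  shows "\<exists>e. x = XEv e \<and> e \<in> a_alph G \<union> Sj \<and> view (Z d f e) q' X F \<and> obs_succ G F e \<noteq> {}"
proof -
  obtain dl fl where rd: "represents G oe ob dl X" "\<not> X \<subseteq> S"
    and rf: "represents G oe b fl F" and q: "q = Y dl fl"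
    using v by (auto simp: view_def)
  from tr q consider (real) e where "x = XEv e" "(Y dl fl, Ev (TEv e), q') \<in> a_trans local_T"
    | (loop) e where "x = XEv e" "e \<in> Sj - a_alph G" "q' = Y dl fl"
    by (auto simp: transformed_trans_Y)
  then show ?thesis
  proof cases
    case (real e)
    then obtain fl' where q': "q' = Z dl fl e" and "(fl, Ev e, fl') \<in> a_trans (H_b G oe b)"
      by (auto dest!: local_T_trans simp: tpo_trans_Y defined_at_def)
    with H_b_step[OF wf oe b rf] have "e \<in> a_alph G" "UR G (post G F e) \<noteq> {}"
      by (auto simp: represents_def)
    with real rd rf q' show ?thesis by (auto simp: view_def obs_succ_def)
  next
    case (loop e)
    with rd rf view_setsD(6)[OF v] show ?thesis by (auto simp: view_def obs_succ_def)
  qed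
qed

lemma follow_Y:
  assumes "view (Y d f) q X F" and "participates G_T q (XEv e) q'" and "e \<in> a_alph G \<union> Sj"
  shows "view (Z d f e) q' X F \<and> obs_succ G F e \<noteq> {}"
  using assms move_from_Y[OF assms(1), of "XEv e" q']
  by (auto simp: participates_def XEv_in_transformed_alph)

lemma move_from_Z:
  assumes v: "view (Z d f e) q X F" and tr: "(q, Ev x, q') \<in> a_trans G_T"
    and x: "\<forall>e'. x \<noteq> XEv e'"
  shows "e \<in> a_alph G \<and> ((\<exists>\<theta>\<in>a_alph G. x = Theta (TEv \<theta>) e) \<or> x = Theta Eps e \<or> x = Theta (Erase e) e)"
proof -
  have e: "e \<in> a_alph G"
  proof (rule ccontr)
    assume "e \<notin> a_alph G"
    then obtain dl fl where "q = Y dl fl" using v by (auto elim: view_waiting)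
    with tr x show False by (auto simp: transformed_trans_Y)
  qed
  obtain dl fl where rd: "represents G oe ob dl X" and q: "q = Z dl fl e"
    using v e by (auto simp: view_def)
  from tr q obtain \<theta> where x: "x = Theta \<theta> e" and "(Z dl fl e, Ev \<theta>, q') \<in> a_trans local_T"
    by (auto simp: transformed_trans_Z)
  then have "(Z dl fl e, Ev \<theta>, q') \<in> tpo_trans (H_obd G S oe ob) (H_b G oe b)"
    using local_T_trans by blast
  then consider \<theta>' dl' where "\<theta> = TEv \<theta>'" "(dl, Ev \<theta>', dl') \<in> a_trans (H_obd G S oe ob)"
    | "\<theta> = Eps" | "\<theta> = Erase e"
    unfolding tpo_trans_Z by blast
  then show ?thesis
    using e x H_obd_step[OF wf oe ob rd] by cases blast+
qed

lemma move_from_W: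
  assumes v: "view (W d f a) q X F" and a: "a = TEv e \<or> a = Erase e"
    and tr: "(q, Ev x, q') \<in> a_trans G_T" and x: "\<forall>e'. x \<noteq> XEv e'"
  shows "x = SigW e a"
proof -
  have e: "e \<in> a_alph G"
  proof (rule ccontr)
    assume "e \<notin> a_alph G"
    then obtain dl fl where "q = Y dl fl" using v a by (auto elim: view_waiting)
    with tr x show False by (auto simp: transformed_trans_Y)
  qed
  obtain dl fl where q: "q = W dl fl a"
    using v a e by (auto simp: view_def)
  from tr q obtain \<sigma> where "x = SigW \<sigma> a" "(W dl fl a, Ev (TEv \<sigma>), q') \<in> a_trans local_T"
    by (auto simp: transformed_trans_W)
  with a show ?thesis by (auto dest!: local_T_trans simp: tpo_trans_W)
qed

lemma participates_Y:
  assumes "participates G_T (Y dl fl) x q'" and "\<forall>e. x \<noteq> XEv e"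
  shows "x \<notin> a_alph G_T \<and> q' = Y dl fl"
  using assms by (auto simp: participates_def transformed_trans_Y split: if_splits)

lemma participates_Z:
  assumes p: "participates G_T (Z dl fl e) (Theta \<theta> e) q'"
    and \<theta>: "\<theta> \<in> TEv ` a_alph G \<union> {Eps} \<union> Erase ` a_alph G"
  shows "(Z dl fl e, Ev \<theta>, q') \<in> tpo_trans (H_obd G S oe ob) (H_b G oe b)"
proof -
  have "Theta \<theta> e \<in> a_alph G_T"
  proof (rule ccontr)
    assume "Theta \<theta> e \<notin> a_alph G_T"
    with p have "Z dl fl e \<in> a_states local_T" by (simp add: participates_def)
    then have "e \<in> obs_comps local_T" by (auto simp: obs_comps_def)
    with \<theta> \<open>Theta \<theta> e \<notin> a_alph G_T\<close> show False by (simp add: Theta_in_transformed_alph)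
  qed
  with p show ?thesis by (auto simp: participates_def transformed_trans_Z dest: local_T_trans)
qed

lemma participates_W:
  assumes p: "participates G_T (W dl fl a) (SigW \<sigma> a) q'" and \<sigma>: "\<sigma> \<in> a_alph G"
  shows "(W dl fl a, Ev (TEv \<sigma>), q') \<in> tpo_trans (H_obd G S oe ob) (H_b G oe b)"
proof -
  have "SigW \<sigma> a \<in> a_alph G_T"
  proof (rule ccontr)
    assume "SigW \<sigma> a \<notin> a_alph G_T"
    with p have "W dl fl a \<in> a_states local_T" by (simp add: participates_def)
    then have "a \<in> act_comps local_T" by (auto simp: act_comps_def)
    with \<sigma> \<open>SigW \<sigma> a \<notin> a_alph G_T\<close> show False
      using SigW_in_transformed_alph[of \<sigma> "a_alph G" a local_T Sj] by simp
  qed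
  with p have "(W dl fl a, Ev (SigW \<sigma> a), q') \<in> a_trans G_T" by (simp add: participates_def)
  then have "(W dl fl a, Ev (TEv \<sigma>), q') \<in> a_trans local_T" by (simp add: transformed_trans_W)
  then show ?thesis by (rule local_T_trans[THEN conjunct1])
qed

lemma follow_Z_TEv:
  assumes v: "view (Z d f e) q X F" and p: "participates G_T q (Theta (TEv \<theta>) e) q'"
    and other: "e \<notin> a_alph G \<Longrightarrow> \<theta> \<in> Sj \<and> e \<in> Sj"
  shows "view (Z d' f e) q' (obs_succ G X \<theta>) F"
proof -
  obtain dl fl where rd: "represents G oe ob dl X" "\<not> X \<subseteq> S"
    and rf: "represents G oe b fl F" and q: "q = local_view (a_alph G) dl fl (Z d f e)"
    using v by (auto simp: view_def)
  show ?thesis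
  proof (cases "e \<in> a_alph G \<and> \<theta> \<in> a_alph G")
    case True
    with p q have "(Z dl fl e, Ev (TEv \<theta>), q') \<in> tpo_trans (H_obd G S oe ob) (H_b G oe b)"
      by (intro participates_Z) auto
    then obtain dl' where "(dl, Ev \<theta>, dl') \<in> a_trans (H_obd G S oe ob)" "q' = Z dl' fl e"
      unfolding tpo_trans_Z by blast
    with H_obd_step[OF wf oe ob rd(1)] True rf show ?thesis
      by (auto simp: view_def obs_succ_def)
  next
    case False
    have "Theta (TEv \<theta>) e \<notin> a_alph G_T"
    proof (cases "e \<in> a_alph G")
      case True
      with False show ?thesis by (auto simp: Theta_in_transformed_alph)
    next
      case False
      with p q show ?thesis using participates_Y by simp
    qed
    with p q False other rd rf show ?thesis
      by (auto simp: participates_def view_def obs_succ_def Theta_in_transformed_alph)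
  qed
qed

lemma follow_Z_Eps:
  assumes v: "view (Z d f e) q X F" and p: "participates G_T q (Theta Eps e) q'"
  shows "view (W d f (TEv e)) q' X F \<and> \<not> obs_succ G X e \<subseteq> S \<and> obs_succ G F e \<noteq> {}"
proof -
  obtain dl fl where rd: "represents G oe ob dl X" "\<not> X \<subseteq> S"
    and rf: "represents G oe b fl F" and q: "q = local_view (a_alph G) dl fl (Z d f e)"
    using v by (auto simp: view_def)
  show ?thesis
  proof (cases "e \<in> a_alph G")
    case True
    with p q have "(Z dl fl e, Ev Eps, q') \<in> tpo_trans (H_obd G S oe ob) (H_b G oe b)"
      by (intro participates_Z) auto
    then obtain dl' fl' where "(dl, Ev e, dl') \<in> a_trans (H_obd G S oe ob)"
      "(fl, Ev e, fl') \<in> a_trans (H_b G oe b)" "q' = W dl fl (TEv e)"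
      unfolding tpo_trans_Z defined_at_def by blast
    with H_obd_step[OF wf oe ob rd(1)] H_b_step[OF wf oe b rf] True rd rf show ?thesis
      by (auto simp: view_def obs_succ_def represents_def)
  next
    case False
    with p q participates_Y[of dl fl "Theta Eps e" q'] rd rf view_setsD(6)[OF v] show ?thesis
      by (auto simp: view_def obs_succ_def)
  qed
qed

lemma follow_Z_Erase:
  assumes v: "view (Z d f e) q X F" and p: "participates G_T q (Theta (Erase e) e) q'"
  shows "view (W d f (Erase e)) q' X F \<and> obs_succ G F e \<noteq> {}"
proof -
  obtain dl fl where rd: "represents G oe ob dl X" "\<not> X \<subseteq> S"
    and rf: "represents G oe b fl F" and q: "q = local_view (a_alph G) dl fl (Z d f e)"
    using v by (auto simp: view_def)
  show ?thesis
  proof (cases "e \<in> a_alph G")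
    case True
    with p q have "(Z dl fl e, Ev (Erase e), q') \<in> tpo_trans (H_obd G S oe ob) (H_b G oe b)"
      by (intro participates_Z) auto
    then obtain fl' where "(fl, Ev e, fl') \<in> a_trans (H_b G oe b)" "q' = W dl fl (Erase e)"
      unfolding tpo_trans_Z defined_at_def by blast
    with H_b_step[OF wf oe b rf] True rd rf show ?thesis
      by (auto simp: view_def obs_succ_def represents_def)
  next
    case False
    with p q participates_Y[of dl fl "Theta (Erase e) e" q'] rd rf view_setsD(6)[OF v] show ?thesis
      by (auto simp: view_def obs_succ_def)
  qed
qed

lemma follow_W_TEv:
  assumes v: "view (W d f (TEv e)) q X F" and p: "participates G_T q (SigW e (TEv e)) q'"
  shows "view (Y d' f') q' (obs_succ G X e) (obs_succ G F e)"
proof -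
  obtain dl fl where rd: "represents G oe ob dl X" "\<not> X \<subseteq> S"
    and rf: "represents G oe b fl F" and q: "q = local_view (a_alph G) dl fl (W d f (TEv e))"
    using v by (auto simp: view_def)
  show ?thesis
  proof (cases "e \<in> a_alph G")
    case True
    with p q have "(W dl fl (TEv e), Ev (TEv e), q') \<in> tpo_trans (H_obd G S oe ob) (H_b G oe b)"
      by (intro participates_W) auto
    then obtain dl' fl' where "(dl, Ev e, dl') \<in> a_trans (H_obd G S oe ob)"
      "(fl, Ev e, fl') \<in> a_trans (H_b G oe b)" "q' = Y dl' fl'"
      unfolding tpo_trans_W by blast
    with H_obd_step[OF wf oe ob rd(1)] H_b_step[OF wf oe b rf] True show ?thesis
      by (auto simp: view_def obs_succ_def)
  next
    case False
    with p q participates_Y[of dl fl "SigW e (TEv e)" q'] rd rf show ?thesis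
      by (auto simp: view_def obs_succ_def)
  qed
qed

lemma follow_W_Erase:
  assumes v: "view (W d f (Erase e)) q X F" and p: "participates G_T q (SigW e (Erase e)) q'"
  shows "view (Y d' f') q' X (obs_succ G F e)"
proof -
  obtain dl fl where rd: "represents G oe ob dl X" "\<not> X \<subseteq> S"
    and rf: "represents G oe b fl F" and q: "q = local_view (a_alph G) dl fl (W d f (Erase e))"
    using v by (auto simp: view_def)
  show ?thesis
  proof (cases "e \<in> a_alph G")
    case True
    with p q have "(W dl fl (Erase e), Ev (TEv e), q') \<in> tpo_trans (H_obd G S oe ob) (H_b G oe b)"
      by (intro participates_W) auto
    then obtain fl' where "(fl, Ev e, fl') \<in> a_trans (H_b G oe b)" "q' = Y dl fl'"
      unfolding tpo_trans_W by blast
    with H_b_step[OF wf oe b rf] True rd show ?thesis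
      by (auto simp: view_def obs_succ_def)
  next
    case False
    with p q participates_Y[of dl fl "SigW e (Erase e)" q'] rd rf show ?thesis
      by (auto simp: view_def obs_succ_def)
  qed
qed

end

section \<open>Simulation of the composed transformed observers\<close>

lemma pending_in_Un: "pending_in (A \<union> B) t \<Longrightarrow> pending_in A t \<or> pending_in B t"
  by (induction "A \<union> B" t rule: pending_in.induct) auto

locale composition =
  c1: component G1 S1 oe1 ob1 b1 "a_alph G2" + c2: component G2 S2 oe2 ob2 b2 "a_alph G1"
  for G1 :: "('q1, 'e) aut" and S1 oe1 ob1 b1 and G2 :: "('q2, 'e) aut" and S2 oe2 ob2 b2 +
  assumes init1: "\<not> UR G1 (a_init G1) \<subseteq> S1" and init2: "\<not> UR G2 (a_init G2) \<subseteq> S2"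
begin

abbreviation T_mono :: "((('q1 \<times> 'q2) set, ('q1 \<times> 'q2) set, 'e) tstate, 'e tlab) aut" where
  "T_mono \<equiv> TPO (det_d (sync G1 G2) (sync_secret S1 S2)) (det (sync G1 G2))"

abbreviation G_T_sync where
  "G_T_sync \<equiv> sync c1.G_T c2.G_T"

definition related where
  "related q t \<longleftrightarrow> t \<in> reachable_set T_mono \<and> pending_in (a_alph G1 \<union> a_alph G2) t
     \<and> (\<exists>X1 F1 X2 F2. d_of t = X1 \<times> X2 \<and> f_of t = F1 \<times> F2
          \<and> c1.view t (fst q) X1 F1 \<and> c2.view t (snd q) X2 F2)"

lemma T_mono_trans_intro:
  assumes "t \<in> reachable_set T_mono"
    and "(t, l, t') \<in> tpo_trans (det_d (sync G1 G2) (sync_secret S1 S2)) (det (sync G1 G2))"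
  shows "(t, l, t') \<in> a_trans T_mono" and "t' \<in> reachable_set T_mono"
  using assms by (auto simp: TPO_trans_iff intro: reachable_set_step)

lemma product_det_d_trans:
  assumes "t \<in> reachable_set T_mono" and "d_of t = X1 \<times> X2"
    and "c1.view t q1 X1 F1" and "c2.view t q2 X2 F2" and "\<sigma> \<in> a_alph G1 \<union> a_alph G2"
    and "\<not> obs_succ G1 X1 \<sigma> \<subseteq> S1" and "\<not> obs_succ G2 X2 \<sigma> \<subseteq> S2"
  shows "(d_of t, Ev \<sigma>, obs_succ G1 X1 \<sigma> \<times> obs_succ G2 X2 \<sigma>)
           \<in> a_trans (det_d (sync G1 G2) (sync_secret S1 S2))"
  using det_d_sync_trans_intro[OF c1.wf c2.wf _ c1.view_setsD(1,2)[OF assms(3)]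
      c2.view_setsD(1,2)[OF assms(4)] assms(5-7)]
    reachable_set_TPO_components[OF assms(1)] assms(2) by simp

lemma product_det_trans:
  assumes "t \<in> reachable_set T_mono" and "f_of t = F1 \<times> F2"
    and "c1.view t q1 X1 F1" and "c2.view t q2 X2 F2" and "\<sigma> \<in> a_alph G1 \<union> a_alph G2"
    and "obs_succ G1 F1 \<sigma> \<noteq> {}" and "obs_succ G2 F2 \<sigma> \<noteq> {}"
  shows "(f_of t, Ev \<sigma>, obs_succ G1 F1 \<sigma> \<times> obs_succ G2 F2 \<sigma>) \<in> a_trans (det (sync G1 G2))"
  using det_sync_trans_intro[OF c1.wf c2.wf _ c1.view_setsD(4,5)[OF assms(3)]
      c2.view_setsD(4,5)[OF assms(4)] assms(5-7)]
    reachable_set_TPO_components[OF assms(1)] assms(2) by simp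

text \<open>Events of the form XEv are shared by both transformed observers but enabled only in
  Y-states, so they are blocked while the TPO processes an event.\<close>

lemma XEv_only_from_Y:
  assumes rel: "related (q1, q2) t" and tr: "((q1, q2), Ev (XEv e), (q1', q2')) \<in> a_trans G_T_sync"
  shows "\<exists>d f. t = Y d f"
proof -
  obtain X1 F1 X2 F2 where pend: "pending_in (a_alph G1 \<union> a_alph G2) t"
    and v1: "c1.view t q1 X1 F1" and v2: "c2.view t q2 X2 F2"
    using rel by (auto simp: related_def)
  have "e \<in> a_alph G1 \<union> a_alph G2"
    using sync_Ev_trans(1)[OF tr] by (auto simp: XEv_in_transformed_alph)
  then have "(q1, Ev (XEv e), q1') \<in> a_trans c1.G_T" "(q2, Ev (XEv e), q2') \<in> a_trans c2.G_T"
    using sync_Ev_trans(2,3)[OF tr] by (auto simp: participates_def XEv_in_transformed_alph)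
  then obtain d1 f1 d2 f2 where "q1 = Y d1 f1" "q2 = Y d2 f2"
    using transformed_XEv_source by metis
  with pending_in_Un[OF pend] show ?thesis
    using c1.view_busy[OF v1] c2.view_busy[OF v2] by blast
qed

lemma moving_component:
  assumes "((q1, q2), Ev x, (q1', q2')) \<in> a_trans G_T_sync"
  obtains "x \<in> a_alph c1.G_T" "(q1, Ev x, q1') \<in> a_trans c1.G_T"
    | "x \<in> a_alph c2.G_T" "(q2, Ev x, q2') \<in> a_trans c2.G_T"
  using sync_Ev_trans[OF assms] by (auto simp: participates_def)

lemma step_Y:
  assumes rel: "related (q1, q2) (Y d f)" and tr: "((q1, q2), Ev x, (q1', q2')) \<in> a_trans G_T_sync"
  shows "\<exists>t'. (Y d f, Ev (rho x), t') \<in> a_trans T_mono \<and> related (q1', q2') t'"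
proof -
  obtain X1 F1 X2 F2 where reach: "Y d f \<in> reachable_set T_mono"
    and d: "d = X1 \<times> X2" and f: "f = F1 \<times> F2"
    and v1: "c1.view (Y d f) q1 X1 F1" and v2: "c2.view (Y d f) q2 X2 F2"
    using rel by (auto simp: related_def)
  obtain e where x: "x = XEv e" and e: "e \<in> a_alph G1 \<union> a_alph G2"
    using tr by (rule moving_component) (use c1.move_from_Y[OF v1] c2.move_from_Y[OF v2] in blast)+
  have v1': "c1.view (Z d f e) q1' X1 F1" and ne1: "obs_succ G1 F1 e \<noteq> {}"
    using c1.follow_Y[OF v1 sync_Ev_trans(2)[OF tr[unfolded x]]] e by auto
  have v2': "c2.view (Z d f e) q2' X2 F2" and ne2: "obs_succ G2 F2 e \<noteq> {}"
    using c2.follow_Y[OF v2 sync_Ev_trans(3)[OF tr[unfolded x]]] e by auto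
  have "defined_at (det (sync G1 G2)) e f"
    using product_det_trans[OF reach _ v1 v2 e ne1 ne2] f by (auto simp: defined_at_def)
  then have "(Y d f, Ev (TEv e), Z d f e)
      \<in> tpo_trans (det_d (sync G1 G2) (sync_secret S1 S2)) (det (sync G1 G2))"
    by (simp add: tpo_trans_Y)
  with reach have "(Y d f, Ev (TEv e), Z d f e) \<in> a_trans T_mono" "Z d f e \<in> reachable_set T_mono"
    by (rule T_mono_trans_intro)+
  moreover have "related (q1', q2') (Z d f e)"
    using calculation(2) e d f v1' v2' by (auto simp: related_def)
  ultimately show ?thesis using x by auto
qed

lemma label_from_Z:
  assumes rel: "related (q1, q2) (Z d f e)" and tr: "((q1, q2), Ev x, (q1', q2')) \<in> a_trans G_T_sync"
  shows "(\<exists>\<theta>. x = Theta (TEv \<theta>) e \<and> \<theta> \<in> a_alph G1 \<union> a_alph G2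
            \<and> (e \<notin> a_alph G1 \<longrightarrow> \<theta> \<in> a_alph G2) \<and> (e \<notin> a_alph G2 \<longrightarrow> \<theta> \<in> a_alph G1))
    \<or> x = Theta Eps e \<or> x = Theta (Erase e) e"
proof -
  obtain X1 F1 X2 F2 where v1: "c1.view (Z d f e) q1 X1 F1" and v2: "c2.view (Z d f e) q2 X2 F2"
    using rel by (auto simp: related_def)
  have x: "\<forall>e'. x \<noteq> XEv e'" using XEv_only_from_Y[OF rel] tr by blast
  have m1: "e \<in> a_alph G1 \<and> ((\<exists>\<theta>\<in>a_alph G1. x = Theta (TEv \<theta>) e) \<or> x = Theta Eps e \<or> x = Theta (Erase e) e)"
    if "(q1, Ev x, q1') \<in> a_trans c1.G_T"
    using c1.move_from_Z[OF v1 that x] .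
  have m2: "e \<in> a_alph G2 \<and> ((\<exists>\<theta>\<in>a_alph G2. x = Theta (TEv \<theta>) e) \<or> x = Theta Eps e \<or> x = Theta (Erase e) e)"
    if "(q2, Ev x, q2') \<in> a_trans c2.G_T"
    using c2.move_from_Z[OF v2 that x] .
  have idle1: "x \<notin> a_alph c1.G_T" if "e \<notin> a_alph G1"
    using that m1 sync_Ev_trans(2)[OF tr] by (auto simp: participates_def)
  have idle2: "x \<notin> a_alph c2.G_T" if "e \<notin> a_alph G2"
    using that m2 sync_Ev_trans(3)[OF tr] by (auto simp: participates_def)
  from tr show ?thesis
    by (rule moving_component) (use m1 m2 idle1 idle2 in blast)+
qed

lemma step_Z_TEv:
  assumes rel: "related (q1, q2) (Z d f e)"
    and tr: "((q1, q2), Ev (Theta (TEv \<theta>) e), (q1', q2')) \<in> a_trans G_T_sync"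
    and \<theta>: "\<theta> \<in> a_alph G1 \<union> a_alph G2"
    and own1: "e \<notin> a_alph G1 \<Longrightarrow> \<theta> \<in> a_alph G2" and own2: "e \<notin> a_alph G2 \<Longrightarrow> \<theta> \<in> a_alph G1"
  shows "\<exists>t'. (Z d f e, Ev (TEv \<theta>), t') \<in> a_trans T_mono \<and> related (q1', q2') t'"
proof -
  obtain X1 F1 X2 F2 where reach: "Z d f e \<in> reachable_set T_mono"
    and e: "e \<in> a_alph G1 \<union> a_alph G2" and d: "d = X1 \<times> X2" and f: "f = F1 \<times> F2"
    and v1: "c1.view (Z d f e) q1 X1 F1" and v2: "c2.view (Z d f e) q2 X2 F2"
    using rel by (auto simp: related_def)
  define d' where "d' = obs_succ G1 X1 \<theta> \<times> obs_succ G2 X2 \<theta>"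
  have v1': "c1.view (Z d' f e) q1' (obs_succ G1 X1 \<theta>) F1"
    by (rule c1.follow_Z_TEv[OF v1 sync_Ev_trans(2)[OF tr]]) (use own1 e in blast)
  have v2': "c2.view (Z d' f e) q2' (obs_succ G2 X2 \<theta>) F2"
    by (rule c2.follow_Z_TEv[OF v2 sync_Ev_trans(3)[OF tr]]) (use own2 e in blast)
  have "(d, Ev \<theta>, d') \<in> a_trans (det_d (sync G1 G2) (sync_secret S1 S2))"
    using product_det_d_trans[OF reach _ v1 v2 \<theta> c1.view_setsD(3)[OF v1'] c2.view_setsD(3)[OF v2']] d
    by (simp add: d'_def)
  then have "(Z d f e, Ev (TEv \<theta>), Z d' f e)
      \<in> tpo_trans (det_d (sync G1 G2) (sync_secret S1 S2)) (det (sync G1 G2))"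
    by (simp add: tpo_trans_Z)
  with reach have "(Z d f e, Ev (TEv \<theta>), Z d' f e) \<in> a_trans T_mono" "Z d' f e \<in> reachable_set T_mono"
    by (rule T_mono_trans_intro)+
  moreover have "related (q1', q2') (Z d' f e)"
    using calculation(2) e f v1' v2' by (auto simp: related_def d'_def)
  ultimately show ?thesis by blast
qed

lemma step_Z_Eps:
  assumes rel: "related (q1, q2) (Z d f e)"
    and tr: "((q1, q2), Ev (Theta Eps e), (q1', q2')) \<in> a_trans G_T_sync"
  shows "\<exists>t'. (Z d f e, Ev Eps, t') \<in> a_trans T_mono \<and> related (q1', q2') t'"
proof -
  obtain X1 F1 X2 F2 where reach: "Z d f e \<in> reachable_set T_mono"
    and e: "e \<in> a_alph G1 \<union> a_alph G2" and d: "d = X1 \<times> X2" and f: "f = F1 \<times> F2"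
    and v1: "c1.view (Z d f e) q1 X1 F1" and v2: "c2.view (Z d f e) q2 X2 F2"
    using rel by (auto simp: related_def)
  have v1': "c1.view (W d f (TEv e)) q1' X1 F1"
    and en1: "\<not> obs_succ G1 X1 e \<subseteq> S1" "obs_succ G1 F1 e \<noteq> {}"
    using c1.follow_Z_Eps[OF v1 sync_Ev_trans(2)[OF tr]] by blast+
  have v2': "c2.view (W d f (TEv e)) q2' X2 F2"
    and en2: "\<not> obs_succ G2 X2 e \<subseteq> S2" "obs_succ G2 F2 e \<noteq> {}"
    using c2.follow_Z_Eps[OF v2 sync_Ev_trans(3)[OF tr]] by blast+
  have "defined_at (det_d (sync G1 G2) (sync_secret S1 S2)) e d"
    using product_det_d_trans[OF reach _ v1 v2 e en1(1) en2(1)] d by (auto simp: defined_at_def)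
  moreover have "defined_at (det (sync G1 G2)) e f"
    using product_det_trans[OF reach _ v1 v2 e en1(2) en2(2)] f by (auto simp: defined_at_def)
  ultimately have "(Z d f e, Ev Eps, W d f (TEv e))
      \<in> tpo_trans (det_d (sync G1 G2) (sync_secret S1 S2)) (det (sync G1 G2))"
    by (simp add: tpo_trans_Z)
  with reach have "(Z d f e, Ev Eps, W d f (TEv e)) \<in> a_trans T_mono" "W d f (TEv e) \<in> reachable_set T_mono"
    by (rule T_mono_trans_intro)+
  moreover have "related (q1', q2') (W d f (TEv e))"
    using calculation(2) e d f v1' v2' by (auto simp: related_def)
  ultimately show ?thesis by blast
qed

lemma step_Z_Erase:
  assumes rel: "related (q1, q2) (Z d f e)"
    and tr: "((q1, q2), Ev (Theta (Erase e) e), (q1', q2')) \<in> a_trans G_T_sync"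
  shows "\<exists>t'. (Z d f e, Ev (Erase e), t') \<in> a_trans T_mono \<and> related (q1', q2') t'"
proof -
  obtain X1 F1 X2 F2 where reach: "Z d f e \<in> reachable_set T_mono"
    and e: "e \<in> a_alph G1 \<union> a_alph G2" and d: "d = X1 \<times> X2" and f: "f = F1 \<times> F2"
    and v1: "c1.view (Z d f e) q1 X1 F1" and v2: "c2.view (Z d f e) q2 X2 F2"
    using rel by (auto simp: related_def)
  have v1': "c1.view (W d f (Erase e)) q1' X1 F1" and en1: "obs_succ G1 F1 e \<noteq> {}"
    using c1.follow_Z_Erase[OF v1 sync_Ev_trans(2)[OF tr]] by blast+
  have v2': "c2.view (W d f (Erase e)) q2' X2 F2" and en2: "obs_succ G2 F2 e \<noteq> {}"
    using c2.follow_Z_Erase[OF v2 sync_Ev_trans(3)[OF tr]] by blast+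
  have "defined_at (det (sync G1 G2)) e f"
    using product_det_trans[OF reach _ v1 v2 e en1 en2] f by (auto simp: defined_at_def)
  then have "(Z d f e, Ev (Erase e), W d f (Erase e))
      \<in> tpo_trans (det_d (sync G1 G2) (sync_secret S1 S2)) (det (sync G1 G2))"
    by (simp add: tpo_trans_Z)
  with reach have "(Z d f e, Ev (Erase e), W d f (Erase e)) \<in> a_trans T_mono"
    "W d f (Erase e) \<in> reachable_set T_mono"
    by (rule T_mono_trans_intro)+
  moreover have "related (q1', q2') (W d f (Erase e))"
    using calculation(2) e d f v1' v2' by (auto simp: related_def)
  ultimately show ?thesis by blast
qed

lemma label_from_W:
  assumes rel: "related (q1, q2) (W d f a)" and tr: "((q1, q2), Ev x, (q1', q2')) \<in> a_trans G_T_sync"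
    and a: "a = TEv e \<or> a = Erase e"
  shows "x = SigW e a"
proof -
  obtain X1 F1 X2 F2 where v1: "c1.view (W d f a) q1 X1 F1" and v2: "c2.view (W d f a) q2 X2 F2"
    using rel by (auto simp: related_def)
  have x: "\<forall>e'. x \<noteq> XEv e'" using XEv_only_from_Y[OF rel] tr by blast
  from tr show ?thesis
    by (rule moving_component) (use c1.move_from_W[OF v1 a _ x] c2.move_from_W[OF v2 a _ x] in blast)+
qed

lemma step_W_TEv:
  assumes rel: "related (q1, q2) (W d f (TEv e))"
    and tr: "((q1, q2), Ev (SigW e (TEv e)), (q1', q2')) \<in> a_trans G_T_sync"
  shows "\<exists>t'. (W d f (TEv e), Ev (TEv e), t') \<in> a_trans T_mono \<and> related (q1', q2') t'"
proof -
  obtain X1 F1 X2 F2 where reach: "W d f (TEv e) \<in> reachable_set T_mono"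
    and e: "e \<in> a_alph G1 \<union> a_alph G2" and d: "d = X1 \<times> X2" and f: "f = F1 \<times> F2"
    and v1: "c1.view (W d f (TEv e)) q1 X1 F1" and v2: "c2.view (W d f (TEv e)) q2 X2 F2"
    using rel by (auto simp: related_def)
  define d' where "d' = obs_succ G1 X1 e \<times> obs_succ G2 X2 e"
  define f' where "f' = obs_succ G1 F1 e \<times> obs_succ G2 F2 e"
  have v1': "c1.view (Y d' f') q1' (obs_succ G1 X1 e) (obs_succ G1 F1 e)"
    using c1.follow_W_TEv[OF v1 sync_Ev_trans(2)[OF tr]] .
  have v2': "c2.view (Y d' f') q2' (obs_succ G2 X2 e) (obs_succ G2 F2 e)"
    using c2.follow_W_TEv[OF v2 sync_Ev_trans(3)[OF tr]] .
  have "(d, Ev e, d') \<in> a_trans (det_d (sync G1 G2) (sync_secret S1 S2))"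
    using product_det_d_trans[OF reach _ v1 v2 e c1.view_setsD(3)[OF v1'] c2.view_setsD(3)[OF v2']] d
    by (simp add: d'_def)
  moreover have "(f, Ev e, f') \<in> a_trans (det (sync G1 G2))"
    using product_det_trans[OF reach _ v1 v2 e c1.view_setsD(6)[OF v1'] c2.view_setsD(6)[OF v2']] f
    by (simp add: f'_def)
  ultimately have "(W d f (TEv e), Ev (TEv e), Y d' f')
      \<in> tpo_trans (det_d (sync G1 G2) (sync_secret S1 S2)) (det (sync G1 G2))"
    by (simp add: tpo_trans_W)
  with reach have "(W d f (TEv e), Ev (TEv e), Y d' f') \<in> a_trans T_mono" "Y d' f' \<in> reachable_set T_mono"
    by (rule T_mono_trans_intro)+
  moreover have "related (q1', q2') (Y d' f')"
    using calculation(2) v1' v2' by (auto simp: related_def d'_def f'_def)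
  ultimately show ?thesis by blast
qed

lemma step_W_Erase:
  assumes rel: "related (q1, q2) (W d f (Erase e))"
    and tr: "((q1, q2), Ev (SigW e (Erase e)), (q1', q2')) \<in> a_trans G_T_sync"
  shows "\<exists>t'. (W d f (Erase e), Ev (TEv e), t') \<in> a_trans T_mono \<and> related (q1', q2') t'"
proof -
  obtain X1 F1 X2 F2 where reach: "W d f (Erase e) \<in> reachable_set T_mono"
    and e: "e \<in> a_alph G1 \<union> a_alph G2" and d: "d = X1 \<times> X2" and f: "f = F1 \<times> F2"
    and v1: "c1.view (W d f (Erase e)) q1 X1 F1" and v2: "c2.view (W d f (Erase e)) q2 X2 F2"
    using rel by (auto simp: related_def)
  define f' where "f' = obs_succ G1 F1 e \<times> obs_succ G2 F2 e"
  have v1': "c1.view (Y d f') q1' X1 (obs_succ G1 F1 e)"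
    using c1.follow_W_Erase[OF v1 sync_Ev_trans(2)[OF tr]] .
  have v2': "c2.view (Y d f') q2' X2 (obs_succ G2 F2 e)"
    using c2.follow_W_Erase[OF v2 sync_Ev_trans(3)[OF tr]] .
  have "(f, Ev e, f') \<in> a_trans (det (sync G1 G2))"
    using product_det_trans[OF reach _ v1 v2 e c1.view_setsD(6)[OF v1'] c2.view_setsD(6)[OF v2']] f
    by (simp add: f'_def)
  then have "(W d f (Erase e), Ev (TEv e), Y d f')
      \<in> tpo_trans (det_d (sync G1 G2) (sync_secret S1 S2)) (det (sync G1 G2))"
    by (simp add: tpo_trans_W)
  with reach have "(W d f (Erase e), Ev (TEv e), Y d f') \<in> a_trans T_mono" "Y d f' \<in> reachable_set T_mono"
    by (rule T_mono_trans_intro)+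
  moreover have "related (q1', q2') (Y d f')"
    using calculation(2) d v1' v2' by (auto simp: related_def f'_def)
  ultimately show ?thesis by blast
qed

lemma simulation_step:
  assumes rel: "related q t" and tr: "(q, Ev x, q') \<in> a_trans G_T_sync"
  shows "\<exists>t'. (t, Ev (rho x), t') \<in> a_trans T_mono \<and> related q' t'"
proof -
  obtain q1 q2 q1' q2' where q: "q = (q1, q2)" "q' = (q1', q2')" by fastforce
  note rel = rel[unfolded q] and tr = tr[unfolded q]
  show ?thesis
  proof (cases t)
    case (Y d f)
    then show ?thesis using step_Y rel tr q by blast
  next
    case (Z d f e)
    with label_from_Z[OF rel[unfolded Z] tr] show ?thesis
      using step_Z_TEv step_Z_Eps step_Z_Erase rel tr q by fastforce
  next
    case (W d f a)
    with rel obtain e where "a = TEv e \<or> a = Erase e"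
      by (cases a) (auto simp: related_def)
    with label_from_W[OF rel[unfolded W] tr] show ?thesis
      using step_W_TEv step_W_Erase rel tr q W by fastforce
  qed
qed

lemma run_simulation:
  "run G_T_sync q s q' \<Longrightarrow> related q t \<Longrightarrow> \<exists>t'. run T_mono t (map rho s) t'"
proof (induction arbitrary: t rule: run.induct)
  case (run_nil q)
  then show ?case by (auto intro: run.run_nil)
next
  case (run_cons q x q1 s q')
  obtain t1 where t1: "(t, Ev (rho x), t1) \<in> a_trans T_mono" "related q1 t1"
    using simulation_step[OF run_cons.prems run_cons.hyps(1)] by blast
  then obtain t' where "run T_mono t1 (map rho s) t'" using run_cons.IH by blast
  with t1(1) show ?case by (auto intro: run.run_cons)
qed

lemma initial_related:
  assumes "q0 \<in> a_init G_T_sync"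
  shows "\<exists>t0\<in>a_init T_mono. related q0 t0"
proof -
  obtain d1 f1 d2 f2 where q0: "q0 = (Y d1 f1, Y d2 f2)"
    and d1: "d1 \<in> a_init (H_obd G1 S1 oe1 ob1)" and f1: "f1 \<in> a_init (H_b G1 oe1 b1)"
    and d2: "d2 \<in> a_init (H_obd G2 S2 oe2 ob2)" and f2: "f2 \<in> a_init (H_b G2 oe2 b2)"
    using assms by (auto simp: local_TPO_def TPO_init)
  let ?X1 = "UR G1 (a_init G1)" and ?X2 = "UR G2 (a_init G2)"
  let ?t0 = "Y (?X1 \<times> ?X2) (?X1 \<times> ?X2)"
  have v1: "c1.view ?t0 (Y d1 f1) ?X1 ?X1"
    using H_obd_init[OF c1.wf c1.oe init1 d1] H_b_init[OF c1.wf c1.oe init1 f1] init1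
    by (simp add: c1.view_def)
  have v2: "c2.view ?t0 (Y d2 f2) ?X2 ?X2"
    using H_obd_init[OF c2.wf c2.oe init2 d2] H_b_init[OF c2.wf c2.oe init2 f2] init2
    by (simp add: c2.view_def)
  have "UR (sync G1 G2) (a_init (sync G1 G2)) = ?X1 \<times> ?X2"
    using UR_sync[OF c1.wf c2.wf] c1.wf c2.wf by (simp add: wf_aut_def)
  then have "?t0 \<in> a_init T_mono"
    using product_not_subset_sync_secret[OF init1 init2]
    by (simp add: TPO_init det_d_def desired_part_def)
  moreover have "related q0 ?t0"
    using reachable_set_init[OF calculation] q0 v1 v2 by (auto simp: related_def)
  ultimately show ?thesis by blast
qed

end

theorem theorem5:
  fixes G1 :: "('q1, 'e) aut" and G2 :: "('q2, 'e) aut"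
    and S1 :: "'q1 set" and S2 :: "'q2 set"
    and oe1 :: "('q1 \<times> 'q1) set" and oe2 :: "('q2 \<times> 'q2) set"
    and ob1 b1 :: "('q1 set set \<times> 'q1 set set) set"
    and ob2 b2 :: "('q2 set set \<times> 'q2 set set) set"
  assumes wf1: "wf_aut G1" and wf2: "wf_aut G2"
    and sec1: "S1 \<subseteq> a_states G1" and sec2: "S2 \<subseteq> a_states G2"
    and init1: "\<not> UR G1 (a_init G1) \<subseteq> S1" and init2: "\<not> UR G2 (a_init G2) \<subseteq> S2"
    and oe1: "opaque_obs_equiv G1 S1 oe1" and oe2: "opaque_obs_equiv G2 S2 oe2"
    and ob1: "opaque_bisim (det (quot G1 oe1)) (quot_set oe1 S1) ob1"
    and ob2: "opaque_bisim (det (quot G2 oe2)) (quot_set oe2 S2) ob2"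
    and b1: "bisimulation (det (quot G1 oe1)) b1"
    and b2: "bisimulation (det (quot G2 oe2)) b2"
  shows "\<forall>s q0 q.
           q0 \<in> a_init (sync (transformed (local_TPO G1 S1 oe1 ob1 b1) (a_alph G1) (a_alph G2))
                              (transformed (local_TPO G2 S2 oe2 ob2 b2) (a_alph G2) (a_alph G1)))
         \<and> run (sync (transformed (local_TPO G1 S1 oe1 ob1 b1) (a_alph G1) (a_alph G2))
                     (transformed (local_TPO G2 S2 oe2 ob2 b2) (a_alph G2) (a_alph G1))) q0 s q
         \<longrightarrow> (\<exists>t0 t. t0 \<in> a_init (TPO (det_d (sync G1 G2) (sync_secret S1 S2)) (det (sync G1 G2)))
                    \<and> run (TPO (det_d (sync G1 G2) (sync_secret S1 S2)) (det (sync G1 G2)))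
                          t0 (map rho s) t)"
proof -
  interpret composition G1 S1 oe1 ob1 b1 G2 S2 oe2 ob2 b2
    by unfold_locales (fact wf1 oe1 ob1 b1 wf2 oe2 ob2 b2 init1 init2)+
  show ?thesis
    using initial_related run_simulation by blast
qed

end
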